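(* Let $\Gamma$ be a countable discrete group with the Glasner–Monod Property $(F)$. Then $\Gamma$ has Property $(T_{\ell_p})$ for every $1<p<\infty$, $p\neq2$.
   Context: An action of $\Gamma$ on a countable set $X$ is amenable if the associated permutation representation of $\Gamma$ on $\ell_2(X)$ weakly contains the trivial representation (i.e. has almost invariant unit vectors). $\Gamma$ has Property $(F)$ if every amenable action of $\Gamma$ on a countable set has a fixed point. All Banach spaces are complex; $\ell_p=\ell_p(\mathbf N)$, $q$ the conjugate exponent, $\mathbf O(\ell_p)$ the group of linear bijective isometries. An orthogonal representation of $\Gamma$ on $\ell_p$ is a homomorphism $\pi:\Gamma\to\mathbf O(\ell_p)$; a sequence of almost invariant vectors is a sequence of unit vectors $f_n$ with $\|\pi(g)f_n-f_n\|\to0$ for all $g$. With $\pi^*$ the dual representation on $\ell_q$, $\ell'_p(\pi)$ is the annihilator in $\ell_p$ of the $\pi^*(\Gamma)$-invariant vectors of $\ell_q$. $\Gamma$ has Property $(T_{\ell_p})$ if for no orthogonal representation $\pi$ on $\ell_p$ does $\ell'_p(\pi)$ contain a sequence of almost invariant vectors. *)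

theory Defs
  imports "HOL-Analysis.Analysis" "HOL-Algebra.Group_Action"
begin

text \<open>Countable sets are modelled as subsets of nat (every countable set is in bijection
with one). Vectors of l2(X) are functions nat => complex, only their values on X matter.\<close>

definition l2_vec :: "nat set \<Rightarrow> (nat \<Rightarrow> complex) \<Rightarrow> bool" where
  "l2_vec X f \<longleftrightarrow> (\<lambda>x. (cmod (f x))\<^sup>2) summable_on X"

definition l2_norm :: "nat set \<Rightarrow> (nat \<Rightarrow> complex) \<Rightarrow> real" where
  "l2_norm X f = sqrt (infsum (\<lambda>x. (cmod (f x))\<^sup>2) X)"

definition perm_rep :: "('g, 'b) monoid_scheme \<Rightarrow> ('g \<Rightarrow> nat \<Rightarrow> nat) \<Rightarrow> 'g \<Rightarrow> (nat \<Rightarrow> complex) \<Rightarrow> (nat \<Rightarrow> complex)" where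
  "perm_rep G \<phi> g f = (\<lambda>x. f (\<phi> (inv\<^bsub>G\<^esub> g) x))"

definition amenable_action :: "('g, 'b) monoid_scheme \<Rightarrow> nat set \<Rightarrow> ('g \<Rightarrow> nat \<Rightarrow> nat) \<Rightarrow> bool" where
  "amenable_action G X \<phi> \<longleftrightarrow> group_action G X \<phi> \<and>
     (\<forall>F \<epsilon>. finite F \<and> F \<subseteq> carrier G \<and> \<epsilon> > 0 \<longrightarrow>
        (\<exists>f. l2_vec X f \<and> l2_norm X f = 1 \<and>
             (\<forall>g\<in>F. l2_norm X (\<lambda>x. perm_rep G \<phi> g f x - f x) < \<epsilon>)))"

definition property_F :: "('g, 'b) monoid_scheme \<Rightarrow> bool" where
  "property_F G \<longleftrightarrow> (\<forall>(X :: nat set) (\<phi> :: 'g \<Rightarrow> nat \<Rightarrow> nat).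
      amenable_action G X \<phi> \<longrightarrow> (\<exists>x\<in>X. \<forall>g\<in>carrier G. \<phi> g x = x))"

definition lp_space :: "real \<Rightarrow> (nat \<Rightarrow> complex) set" where
  "lp_space p = {f. (\<lambda>n. cmod (f n) powr p) summable_on UNIV}"

definition lp_norm :: "real \<Rightarrow> (nat \<Rightarrow> complex) \<Rightarrow> real" where
  "lp_norm p f = (infsum (\<lambda>n. cmod (f n) powr p) UNIV) powr (1 / p)"

definition conj_exp :: "real \<Rightarrow> real" where
  "conj_exp p = p / (p - 1)"

definition pairing :: "(nat \<Rightarrow> complex) \<Rightarrow> (nat \<Rightarrow> complex) \<Rightarrow> complex" where
  "pairing f \<psi> = infsum (\<lambda>n. f n * \<psi> n) UNIV"

definition lp_isometry :: "real \<Rightarrow> ((nat \<Rightarrow> complex) \<Rightarrow> (nat \<Rightarrow> complex)) \<Rightarrow> bool" where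
  "lp_isometry p T \<longleftrightarrow>
     bij_betw T (lp_space p) (lp_space p) \<and>
     (\<forall>f\<in>lp_space p. \<forall>h\<in>lp_space p. T (\<lambda>n. f n + h n) = (\<lambda>n. T f n + T h n)) \<and>
     (\<forall>f\<in>lp_space p. \<forall>c. T (\<lambda>n. c * f n) = (\<lambda>n. c * T f n)) \<and>
     (\<forall>f\<in>lp_space p. lp_norm p (T f) = lp_norm p f)"

definition orth_rep :: "('g, 'b) monoid_scheme \<Rightarrow> real \<Rightarrow> ('g \<Rightarrow> (nat \<Rightarrow> complex) \<Rightarrow> (nat \<Rightarrow> complex)) \<Rightarrow> bool" where
  "orth_rep G p \<pi> \<longleftrightarrow>
     (\<forall>g\<in>carrier G. lp_isometry p (\<pi> g)) \<and>
     (\<forall>g\<in>carrier G. \<forall>h\<in>carrier G. \<forall>f\<in>lp_space p. \<pi> (g \<otimes>\<^bsub>G\<^esub> h) f = \<pi> g (\<pi> h f))"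

text \<open>Vectors of l_q invariant under the dual representation
  pi*(g) psi = psi o pi(g^{-1}) (as functionals via the pairing); invariance for all g.\<close>
definition dual_invariant :: "('g, 'b) monoid_scheme \<Rightarrow> real \<Rightarrow> ('g \<Rightarrow> (nat \<Rightarrow> complex) \<Rightarrow> (nat \<Rightarrow> complex)) \<Rightarrow> (nat \<Rightarrow> complex) set" where
  "dual_invariant G p \<pi> = {\<psi> \<in> lp_space (conj_exp p).
      \<forall>g\<in>carrier G. \<forall>f\<in>lp_space p. pairing (\<pi> (inv\<^bsub>G\<^esub> g) f) \<psi> = pairing f \<psi>}"

definition lp_prime :: "('g, 'b) monoid_scheme \<Rightarrow> real \<Rightarrow> ('g \<Rightarrow> (nat \<Rightarrow> complex) \<Rightarrow> (nat \<Rightarrow> complex)) \<Rightarrow> (nat \<Rightarrow> complex) set" where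
  "lp_prime G p \<pi> = {f \<in> lp_space p. \<forall>\<psi>\<in>dual_invariant G p \<pi>. pairing f \<psi> = 0}"

definition property_T_lp :: "('g, 'b) monoid_scheme \<Rightarrow> real \<Rightarrow> bool" where
  "property_T_lp G p \<longleftrightarrow> (\<forall>\<pi>. orth_rep G p \<pi> \<longrightarrow>
      \<not> (\<exists>f :: nat \<Rightarrow> nat \<Rightarrow> complex.
            (\<forall>n. f n \<in> lp_prime G p \<pi> \<and> lp_norm p (f n) = 1) \<and>
            (\<forall>g\<in>carrier G. (\<lambda>n. lp_norm p (\<lambda>k. \<pi> g (f n) k - f n k)) \<longlonglongrightarrow> 0)))"

end

theory Submission
  imports Defs
begin

text \<open>
  For \<open>p \<noteq> 2\<close> the norm of \<open>\<ell>\<^sub>p\<close> detects disjointness of supports: the Clarkson-type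
  equality \<open>\<parallel>f + h\<parallel>\<^sup>p + \<parallel>f - h\<parallel>\<^sup>p = 2(\<parallel>f\<parallel>\<^sup>p + \<parallel>h\<parallel>\<^sup>p)\<close> holds exactly when \<open>f\<close> and \<open>h\<close>
  are disjointly supported. Hence every linear isometry maps \<open>\<delta>\<^sub>k\<close> to \<open>c\<^sub>k \<delta>\<^bsub>\<sigma>(k)\<^esub>\<close> with \<open>\<sigma>\<close>
  a permutation and \<open>|c\<^sub>k| = 1\<close> (Lamperti), and an orthogonal representation \<open>\<pi>\<close> gives an
  action \<open>\<sigma>\<close> of \<open>\<Gamma>\<close> on \<open>\<nat>\<close> with unimodular weights.

  On a coordinate fixed by all \<open>\<sigma>\<^sub>g\<close> the weights form a character of \<open>\<Gamma>\<close>. It is trivial: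
  translation on its abelian image is amenable (Folner boxes), so Property (F) gives a fixed
  point. Thus \<open>\<delta>\<^sub>k\<close> is \<open>\<pi>\<^sup>*\<close>-invariant and the vectors of \<open>\<ell>'\<^sub>p(\<pi>)\<close> vanish on these coordinates.

  On the remaining coordinates the Mazur map \<open>f \<mapsto> |f|\<^bsup>p/2\<^esup>\<close>, uniformly continuous from
  the unit sphere of \<open>\<ell>\<^sub>p\<close> to that of \<open>\<ell>\<^sub>2\<close>, turns almost invariant unit vectors of
  \<open>\<ell>'\<^sub>p(\<pi>)\<close> into almost invariant vectors of the permutation representation. Property (F)
  then yields a coordinate fixed by every \<open>\<sigma>\<^sub>g\<close> among the moved ones, a contradiction.
\<close>

lemma convex_scaled_powr:
  assumes "s > 0"
  shows "convex_on {0<..} (\<lambda>x::real. (s - 1) * x powr s)"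
proof (rule f''_ge0_imp_convex)
  fix x :: real assume x: "x \<in> {0<..}"
  show "DERIV (\<lambda>x. (s - 1) * x powr s) x :> (s - 1) * (s * x powr (s - 1))"
    using x by (intro DERIV_cmult has_real_derivative_powr) simp
  show "DERIV (\<lambda>x. (s - 1) * (s * x powr (s - 1))) x :> (s - 1) * (s * ((s - 1) * x powr (s - 1 - 1)))"
    using x by (intro DERIV_cmult has_real_derivative_powr) simp
  have "(s - 1) * (s * ((s - 1) * x powr (s - 1 - 1))) = s * ((s - 1) * (s - 1)) * x powr (s - 1 - 1)"
    by (simp add: algebra_simps)
  moreover have "0 \<le> s * ((s - 1) * (s - 1)) * x powr (s - 1 - 1)"
    using assms by simp
  ultimately show "(s - 1) * (s * ((s - 1) * x powr (s - 1 - 1))) \<ge> 0"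
    by (simp only:)
qed simp

lemma powr_midpoint_sign:
  fixes s x y :: real
  assumes "s > 0" "x \<ge> 0" "y \<ge> 0"
  shows "0 \<le> (s - 1) * (x powr s + y powr s - 2 * ((x + y) / 2) powr s)"
proof -
  have endpoint: "0 \<le> (s - 1) * (y powr s - 2 * (y / 2) powr s)" if "y \<ge> 0" for y :: real
  proof -
    have "2 * (y / 2) powr s = (2 / 2 powr s) * y powr s" using that by (simp add: powr_divide)
    also have "2 / 2 powr s = 2 powr (1 - s)" by (simp add: powr_diff)
    finally have "y powr s - 2 * (y / 2) powr s = (1 - 2 powr (1 - s)) * y powr s"
      by (simp add: algebra_simps)
    then have eq: "(s - 1) * (y powr s - 2 * (y / 2) powr s) = ((s - 1) * (1 - 2 powr (1 - s))) * y powr s"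
      by simp
    have sign: "0 \<le> (s - 1) * (1 - 2 powr (1 - s))"
    proof (cases "s \<ge> 1")
      case True
      then have "2 powr (1 - s) \<le> 2 powr 0" by (intro powr_mono) auto
      with True show ?thesis by simp
    next
      case False
      then have "2 powr 0 \<le> 2 powr (1 - s)" by (intro powr_mono) auto
      with False show ?thesis by (simp add: mult_nonpos_nonpos)
    qed
    show ?thesis unfolding eq by (rule mult_nonneg_nonneg[OF sign powr_ge_zero])
  qed
  show ?thesis
  proof (cases "x = 0 \<or> y = 0")
    case True
    then show ?thesis using endpoint[of x] endpoint[of y] assms by (elim disjE) simp_all
  next
    case False
    with assms have "x > 0" "y > 0" by auto
    then have "(s - 1) * ((1 - 1/2) *\<^sub>R x + (1/2) *\<^sub>R y) powr s
        \<le> (1 - 1/2) * ((s - 1) * x powr s) + (1/2) * ((s - 1) * y powr s)"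
      by (intro convex_onD[OF convex_scaled_powr[OF assms(1)]]) auto
    then show ?thesis by (simp add: field_simps)
  qed
qed

lemma powr_add_sign:
  fixes s a b :: real
  assumes "s > 0" "a \<ge> 0" "b \<ge> 0"
  shows "0 \<le> (s - 1) * ((a + b) powr s - a powr s - b powr s)"
    and "s \<noteq> 1 \<Longrightarrow> a > 0 \<Longrightarrow> b > 0 \<Longrightarrow> 0 < (s - 1) * ((a + b) powr s - a powr s - b powr s)"
proof -
  have gap: "0 < (s - 1) * ((a + b) powr (s - 1) - c powr (s - 1))"
    if "s \<noteq> 1" "0 < c" "c < a + b" for c
  proof (cases "s > 1")
    case True
    then have "c powr (s - 1) < (a + b) powr (s - 1)" using that by (intro powr_less_mono2) auto
    with True show ?thesis by simp
  next
    case False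
    with that have "s < 1" by simp
    then have "(a + b) powr (s - 1) < c powr (s - 1)" using that by (intro powr_less_mono2_neg) auto
    with \<open>s < 1\<close> show ?thesis by (simp add: mult_neg_neg)
  qed
  have split: "(s - 1) * ((a + b) powr s - a powr s - b powr s)
      = a * ((s - 1) * ((a + b) powr (s - 1) - a powr (s - 1)))
        + b * ((s - 1) * ((a + b) powr (s - 1) - b powr (s - 1)))"
    if "a > 0" "b > 0"
  proof -
    have e: "c * c powr (s - 1) = c powr s" if "c \<ge> 0" for c :: real
      using that by (simp add: powr_mult_base)
    have "(a + b) powr s = a * (a + b) powr (s - 1) + b * (a + b) powr (s - 1)"
      using e[of "a + b"] that by (simp add: distrib_right)
    then have "(s - 1) * ((a + b) powr s - a powr s - b powr s)
        = (s - 1) * (a * (a + b) powr (s - 1) + b * (a + b) powr (s - 1)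
            - a * a powr (s - 1) - b * b powr (s - 1))"
      using e[of a] e[of b] that by simp
    then show ?thesis by (simp add: algebra_simps)
  qed
  show strict: "0 < (s - 1) * ((a + b) powr s - a powr s - b powr s)"
    if "s \<noteq> 1" "a > 0" "b > 0"
  proof -
    have "0 < a * ((s - 1) * ((a + b) powr (s - 1) - a powr (s - 1)))"
      by (rule mult_pos_pos) (use that gap[of a] in auto)
    moreover have "0 < b * ((s - 1) * ((a + b) powr (s - 1) - b powr (s - 1)))"
      by (rule mult_pos_pos) (use that gap[of b] in auto)
    ultimately show ?thesis unfolding split[OF that(2,3)] by simp
  qed
  show "0 \<le> (s - 1) * ((a + b) powr s - a powr s - b powr s)"
    using assms strict by (cases "s = 1 \<or> a = 0 \<or> b = 0") (auto intro: less_imp_le)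
qed

lemma powr_diff_abs_le:
  fixes r x y :: real
  assumes "0 < r" "r \<le> 1" "x \<ge> 0" "y \<ge> 0"
  shows "\<bar>x powr r - y powr r\<bar> \<le> \<bar>x - y\<bar> powr r"
proof -
  have one_side: "u powr r - v powr r \<le> (u - v) powr r" if "v \<le> u" "v \<ge> 0" for u v :: real
  proof -
    have "0 \<le> (r - 1) * (((u - v) + v) powr r - (u - v) powr r - v powr r)"
      using that assms(1) by (intro powr_add_sign(1)) auto
    then show ?thesis using assms(2) by (cases "r = 1") (auto simp: zero_le_mult_iff)
  qed
  show ?thesis
  proof (cases "y \<le> x")
    case True
    then have "y powr r \<le> x powr r" using assms by (intro powr_mono2) auto
    with one_side[OF True assms(4)] True show ?thesis by simp
  next
    case False
    then have "x powr r \<le> y powr r" using assms by (intro powr_mono2) auto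
    with one_side[of x y] False assms show ?thesis by simp
  qed
qed

lemma mazur_pointwise_le:
  fixes a b p :: real
  assumes "0 < p" "p \<le> 2" "a \<ge> 0" "b \<ge> 0"
  shows "(a powr (p / 2) - b powr (p / 2))\<^sup>2 \<le> \<bar>a - b\<bar> powr p"
proof -
  have "\<bar>a powr (p / 2) - b powr (p / 2)\<bar>\<^sup>2 \<le> (\<bar>a - b\<bar> powr (p / 2))\<^sup>2"
    using assms by (intro power_mono powr_diff_abs_le) auto
  also have "\<dots> = \<bar>a - b\<bar> powr p" by (simp add: powr_powr flip: powr_realpow')
  finally show ?thesis by simp
qed

lemma powr_diff_le_tangent:
  fixes r x y :: real
  assumes "r \<ge> 1" "0 \<le> y" "y \<le> x"
  shows "x powr r - y powr r \<le> r * x powr (r - 1) * (x - y)"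
proof (cases "y = 0")
  case True
  have "x powr r = x * x powr (r - 1)" using assms by (simp add: powr_mult_base)
  also have "\<dots> \<le> r * (x * x powr (r - 1))"
    using mult_right_mono[of 1 r "x * x powr (r - 1)"] assms by simp
  finally show ?thesis using True assms by (simp add: algebra_simps)
next
  case False
  with assms have "y > 0" "x > 0" by auto
  have "y powr r - x powr r \<ge> (r * x powr (r - 1)) * (y - x)"
  proof (rule convex_on_imp_above_tangent[OF powr_convex[OF assms(1)]])
    show "((\<lambda>x. x powr r) has_field_derivative r * x powr (r - 1)) (at x within {0<..})"
      using has_real_derivative_powr[OF \<open>x > 0\<close>] by (rule has_field_derivative_at_within)
  qed (use \<open>x > 0\<close> \<open>y > 0\<close> in \<open>auto simp: convex_connected interior_open\<close>)
  then show ?thesis by (simp add: algebra_simps)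
qed

lemma powr_diff_2_mult_square: "x \<ge> 0 \<Longrightarrow> x powr (a - 2) * x\<^sup>2 = x powr a"
  for x a :: real
proof (cases "x = 0")
  case False
  assume "x \<ge> 0"
  with False have "x\<^sup>2 = x powr 2" by (simp add: powr_realpow)
  then show ?thesis by (simp flip: powr_add)
qed simp

lemma powr_two_regimes_le:
  fixes p x d \<eta> :: real
  assumes "p > 2" "x \<ge> 0" "d \<ge> 0" "\<eta> > 0"
  shows "x powr (p - 2) * d\<^sup>2 \<le> \<eta> powr (2 - p) * d powr p + \<eta>\<^sup>2 * x powr p"
proof (cases "\<eta> * x \<le> d")
  case True
  then have "x powr (p - 2) \<le> (d / \<eta>) powr (p - 2)"
    using assms by (intro powr_mono2) (auto simp: field_simps)
  also have "\<dots> = d powr (p - 2) / \<eta> powr (p - 2)"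
    using assms by (intro powr_divide)
  also have "\<dots> = \<eta> powr (2 - p) * d powr (p - 2)"
    using powr_minus[of \<eta> "p - 2"] by (simp add: divide_inverse mult.commute)
  finally have "x powr (p - 2) * d\<^sup>2 \<le> \<eta> powr (2 - p) * d powr (p - 2) * d\<^sup>2"
    by (rule mult_right_mono) simp
  also have "\<dots> = \<eta> powr (2 - p) * (d powr (p - 2) * d\<^sup>2)" by (rule mult.assoc)
  also have "d powr (p - 2) * d\<^sup>2 = d powr p" using assms by (intro powr_diff_2_mult_square) simp
  finally show ?thesis by (simp add: add_increasing2)
next
  case False
  then have "x powr (p - 2) * d\<^sup>2 \<le> x powr (p - 2) * (\<eta> * x)\<^sup>2"
    using assms by (intro mult_left_mono power_mono) auto
  also have "\<dots> = \<eta>\<^sup>2 * (x powr (p - 2) * x\<^sup>2)" by (simp add: power_mult_distrib)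
  also have "x powr (p - 2) * x\<^sup>2 = x powr p" using assms by (intro powr_diff_2_mult_square) simp
  finally show ?thesis by (simp add: add_increasing)
qed

lemma mazur_pointwise_gt:
  fixes a b p \<eta> :: real
  assumes p: "p > 2" and ab: "a \<ge> 0" "b \<ge> 0" and \<eta>: "\<eta> > 0"
  shows "(a powr (p / 2) - b powr (p / 2))\<^sup>2
    \<le> (p / 2)\<^sup>2 * (\<eta> powr (2 - p) * \<bar>a - b\<bar> powr p + \<eta>\<^sup>2 * (a powr p + b powr p))"
proof -
  have ordered: "(x powr (p / 2) - y powr (p / 2))\<^sup>2
      \<le> (p / 2)\<^sup>2 * (\<eta> powr (2 - p) * (x - y) powr p + \<eta>\<^sup>2 * x powr p)"
    if "0 \<le> y" "y \<le> x" for x y :: real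
  proof -
    have "0 \<le> x powr (p / 2) - y powr (p / 2)" using that p by (simp add: powr_mono2)
    then have "(x powr (p / 2) - y powr (p / 2))\<^sup>2 \<le> (p / 2 * x powr (p / 2 - 1) * (x - y))\<^sup>2"
      using that p by (intro power_mono powr_diff_le_tangent) auto
    also have "\<dots> = (p / 2)\<^sup>2 * (x powr (p - 2) * (x - y)\<^sup>2)"
    proof -
      have sq: "(x powr (p / 2 - 1))\<^sup>2 = x powr (p - 2)"
        by (simp add: power2_eq_square flip: powr_add)
      show ?thesis unfolding power_mult_distrib sq by (simp only: mult.assoc)
    qed
    also have "\<dots> \<le> (p / 2)\<^sup>2 * (\<eta> powr (2 - p) * (x - y) powr p + \<eta>\<^sup>2 * x powr p)"
      using that p \<eta> by (intro mult_left_mono powr_two_regimes_le) auto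
    finally show ?thesis .
  qed
  have enlarge: "(p / 2)\<^sup>2 * (\<eta> powr (2 - p) * t + \<eta>\<^sup>2 * c)
      \<le> (p / 2)\<^sup>2 * (\<eta> powr (2 - p) * t + \<eta>\<^sup>2 * (a powr p + b powr p))"
    if "c \<le> a powr p + b powr p" for t c
    using that by (intro mult_left_mono add_left_mono) auto
  show ?thesis
  proof (cases "b \<le> a")
    case True
    then have abs: "\<bar>a - b\<bar> = a - b" by simp
    show ?thesis unfolding abs by (rule order_trans[OF ordered[OF ab(2) True] enlarge]) simp
  next
    case False
    then have abs: "\<bar>a - b\<bar> = b - a" and "a \<le> b" by simp_all
    show ?thesis unfolding abs power2_commute[of "a powr (p / 2)"]
      by (rule order_trans[OF ordered[OF ab(1) \<open>a \<le> b\<close>] enlarge]) simp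
  qed
qed

lemma diff_square_le_2_sum: "(x - y)\<^sup>2 \<le> 2 * (x\<^sup>2 + y\<^sup>2)" for x y :: real
  using zero_le_power2[of "x + y"] by (simp add: power2_eq_square algebra_simps)

lemma powr_half_square: "(x powr (p / 2))\<^sup>2 = x powr p" for x p :: real
  by (simp add: power2_eq_square flip: powr_add)

lemma sqrt_diff_square_le: "a \<ge> 0 \<Longrightarrow> b \<ge> 0 \<Longrightarrow> (sqrt a - sqrt b)\<^sup>2 \<le> \<bar>a - b\<bar>"
proof -
  assume a: "a \<ge> 0" and b: "b \<ge> 0"
  have "(sqrt a - sqrt b)\<^sup>2 = \<bar>sqrt a - sqrt b\<bar> * \<bar>sqrt a - sqrt b\<bar>" by (simp add: power2_eq_square)
  also have "\<dots> \<le> \<bar>sqrt a - sqrt b\<bar> * (sqrt a + sqrt b)"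
    using a b by (intro mult_left_mono) (auto simp: abs_if)
  also have "\<dots> = \<bar>(sqrt a - sqrt b) * (sqrt a + sqrt b)\<bar>" using a b by (simp add: abs_mult)
  also have "(sqrt a - sqrt b) * (sqrt a + sqrt b) = a - b" using a b by (simp add: algebra_simps)
  finally show ?thesis .
qed

definition lp_sum :: "real \<Rightarrow> (nat \<Rightarrow> complex) \<Rightarrow> real" where
  "lp_sum p f = infsum (\<lambda>n. cmod (f n) powr p) UNIV"

lemma lp_sum_nonneg: "lp_sum p f \<ge> 0"
  unfolding lp_sum_def by (rule infsum_nonneg) simp

lemma lp_norm_eq_lp_sum_powr: "lp_norm p f = lp_sum p f powr (1 / p)"
  by (simp add: lp_norm_def lp_sum_def)

lemma lp_norm_powr: "p > 0 \<Longrightarrow> lp_norm p f powr p = lp_sum p f"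
  using lp_sum_nonneg[of p f] by (simp add: lp_norm_eq_lp_sum_powr powr_powr)

lemma lp_norm_eq_iff:
  assumes "p > 0"
  shows "lp_norm p f = lp_norm p h \<longleftrightarrow> lp_sum p f = lp_sum p h"
proof
  assume "lp_norm p f = lp_norm p h"
  then have "lp_norm p f powr p = lp_norm p h powr p" by simp
  then show "lp_sum p f = lp_sum p h" by (simp add: lp_norm_powr assms)
qed (simp add: lp_norm_eq_lp_sum_powr)

lemma lp_norm_eq_1_iff:
  assumes "p > 0"
  shows "lp_norm p f = 1 \<longleftrightarrow> lp_sum p f = 1"
proof
  assume "lp_norm p f = 1"
  then have "lp_norm p f powr p = 1" by simp
  then show "lp_sum p f = 1" by (simp add: lp_norm_powr assms)
qed (simp add: lp_norm_eq_lp_sum_powr)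

lemma lp_space_scale: "f \<in> lp_space p \<Longrightarrow> (\<lambda>n. c * f n) \<in> lp_space p"
  unfolding lp_space_def
  by (simp add: norm_mult powr_mult summable_on_cmult_right)

lemma lp_space_add:
  assumes "f \<in> lp_space p" "h \<in> lp_space p" "p > 0"
  shows "(\<lambda>n. f n + h n) \<in> lp_space p"
proof -
  have bound: "cmod (a + b) powr p \<le> 2 powr p * (cmod a powr p + cmod b powr p)" for a b :: complex
  proof -
    have "cmod (a + b) powr p \<le> (2 * max (cmod a) (cmod b)) powr p"
      using norm_triangle_ineq[of a b] assms(3) by (intro powr_mono2) auto
    also have "\<dots> = 2 powr p * max (cmod a) (cmod b) powr p" by (simp add: powr_mult)
    also have "\<dots> \<le> 2 powr p * (cmod a powr p + cmod b powr p)" by (auto simp: max_def)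
    finally show ?thesis .
  qed
  have "(\<lambda>n. 2 powr p * (cmod (f n) powr p + cmod (h n) powr p)) summable_on UNIV"
    using assms unfolding lp_space_def by (intro summable_on_cmult_right summable_on_add) auto
  then show ?thesis
    unfolding lp_space_def mem_Collect_eq by (rule summable_on_comparison_test) (use bound in auto)
qed

lemma lp_space_diff:
  assumes "f \<in> lp_space p" "h \<in> lp_space p" "p > 0"
  shows "(\<lambda>n. f n - h n) \<in> lp_space p"
  using lp_space_add[OF assms(1) lp_space_scale[OF assms(2), of "-1"] assms(3)] by simp

lemma lp_space_finite_support:
  assumes "finite S" "\<And>n. n \<notin> S \<Longrightarrow> f n = 0"
  shows "f \<in> lp_space p"
proof -
  have "(\<lambda>n. cmod (f n) powr p) summable_on S" using assms(1) by simp
  then show ?thesis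
    unfolding lp_space_def mem_Collect_eq
    using summable_on_cong_neutral[of UNIV S "\<lambda>n. cmod (f n) powr p"] assms(2) by auto
qed

lemma lp_space_indicator: "indicator {k} \<in> lp_space p"
  by (rule lp_space_finite_support[of "{k}"]) auto

lemma lp_sum_single: "lp_sum p (\<lambda>n. c * indicator {k} n) = cmod c powr p"
proof -
  have "lp_sum p (\<lambda>n. c * indicator {k} n) = infsum (\<lambda>n. cmod (c * indicator {k} n) powr p) {k}"
    unfolding lp_sum_def by (rule infsum_cong_neutral) (simp_all add: indicator_def)
  then show ?thesis by simp
qed

lemma pairing_indicator: "pairing f (indicator {k}) = f k"
proof -
  have "pairing f (indicator {k}) = infsum (\<lambda>n. f n * indicator {k} n) {k}"
    unfolding pairing_def by (rule infsum_cong_neutral) (simp_all add: indicator_def)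
  then show ?thesis by simp
qed

lemma lp_sum_has_sum: "f \<in> lp_space p \<Longrightarrow> ((\<lambda>n. cmod (f n) powr p) has_sum lp_sum p f) UNIV"
  by (simp add: lp_space_def lp_sum_def)

section \<open>Disjointness of supports\<close>

definition clarkson_defect :: "real \<Rightarrow> complex \<Rightarrow> complex \<Rightarrow> real" where
  "clarkson_defect p a b = cmod (a + b) powr p + cmod (a - b) powr p - 2 * (cmod a powr p + cmod b powr p)"

lemma clarkson_defect_disjoint: "a * b = 0 \<Longrightarrow> clarkson_defect p a b = 0"
  by (auto simp: clarkson_defect_def)

lemma clarkson_defect_sign:
  assumes "p > 0"
  shows "0 \<le> (p - 2) * clarkson_defect p a b"
    and "p \<noteq> 2 \<Longrightarrow> a \<noteq> 0 \<Longrightarrow> b \<noteq> 0 \<Longrightarrow> 0 < (p - 2) * clarkson_defect p a b"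
proof -
  define s where "s = p / 2"
  define x y \<alpha> \<beta> where "x = (cmod (a + b))\<^sup>2" and "y = (cmod (a - b))\<^sup>2"
    and "\<alpha> = (cmod a)\<^sup>2" and "\<beta> = (cmod b)\<^sup>2"
  have s: "s > 0" and p_eq: "p - 2 = 2 * (s - 1)" using assms by (simp_all add: s_def)
  have powr_sq: "cmod z powr p = (cmod z)\<^sup>2 powr s" for z
  proof -
    have sq: "(cmod z)\<^sup>2 = cmod z powr 2" by (cases "z = 0") (simp_all add: powr_realpow)
    have "(cmod z)\<^sup>2 powr s = cmod z powr (2 * s)" unfolding sq by (rule powr_powr)
    then show ?thesis by (simp add: s_def)
  qed
  have "x + y = 2 * (\<alpha> + \<beta>)" \<comment> \<open>parallelogram law\<close>
    unfolding x_def y_def \<alpha>_def \<beta>_def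
    by (simp only: cmod_power2) (simp add: power2_eq_square algebra_simps)
  then have mid: "(x + y) / 2 = \<alpha> + \<beta>" by simp
  have defect: "clarkson_defect p a b = x powr s + y powr s - 2 * (\<alpha> powr s + \<beta> powr s)"
    unfolding clarkson_defect_def powr_sq x_def y_def \<alpha>_def \<beta>_def ..
  have decomp: "(p - 2) * clarkson_defect p a b
      = 2 * ((s - 1) * (x powr s + y powr s - 2 * ((x + y) / 2) powr s))
        + 4 * ((s - 1) * ((\<alpha> + \<beta>) powr s - \<alpha> powr s - \<beta> powr s))"
    unfolding defect mid p_eq by (simp add: algebra_simps)
  have midpoint: "0 \<le> (s - 1) * (x powr s + y powr s - 2 * ((x + y) / 2) powr s)"
    using s by (intro powr_midpoint_sign) (auto simp: x_def y_def)
  have \<alpha>\<beta>: "\<alpha> \<ge> 0" "\<beta> \<ge> 0" by (simp_all add: \<alpha>_def \<beta>_def)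
  show "0 \<le> (p - 2) * clarkson_defect p a b"
    unfolding decomp using midpoint powr_add_sign(1)[OF s \<alpha>\<beta>] by simp
  assume "p \<noteq> 2" "a \<noteq> 0" "b \<noteq> 0"
  then have "s \<noteq> 1" "\<alpha> > 0" "\<beta> > 0" by (simp_all add: s_def \<alpha>_def \<beta>_def)
  then show "0 < (p - 2) * clarkson_defect p a b"
    unfolding decomp using midpoint powr_add_sign(2)[OF s \<alpha>\<beta>] by simp
qed

lemma lp_disjoint_support_iff:
  assumes f: "f \<in> lp_space p" and h: "h \<in> lp_space p" and p: "p > 0" "p \<noteq> 2"
  shows "(\<forall>n. f n * h n = 0) \<longleftrightarrow>
    lp_sum p (\<lambda>n. f n + h n) + lp_sum p (\<lambda>n. f n - h n) = 2 * (lp_sum p f + lp_sum p h)"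
    (is "_ \<longleftrightarrow> ?L = ?R")
proof -
  have "((\<lambda>n. cmod (f n + h n) powr p + cmod (f n - h n) powr p
            + (-2) * (cmod (f n) powr p + cmod (h n) powr p)) has_sum (?L + (-2) * (lp_sum p f + lp_sum p h))) UNIV"
    using f h p(1)
    by (intro has_sum_add has_sum_cmult_right lp_sum_has_sum lp_space_add lp_space_diff)
  then have "((\<lambda>n. (p - 2) * clarkson_defect p (f n) (h n)) has_sum ((p - 2) * (?L - ?R))) UNIV"
    unfolding clarkson_defect_def by (intro has_sum_cmult_right) (simp add: algebra_simps)
  note sum = this
  show ?thesis
  proof
    assume "\<forall>n. f n * h n = 0"
    then have "((\<lambda>n. (p - 2) * clarkson_defect p (f n) (h n)) has_sum 0) UNIV"
      by (simp add: clarkson_defect_disjoint)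
    with sum have "(p - 2) * (?L - ?R) = 0" by (rule has_sum_unique)
    with p(2) show "?L = ?R" by simp
  next
    assume "?L = ?R"
    show "\<forall>n. f n * h n = 0"
    proof
      fix n
      have "(p - 2) * clarkson_defect p (f n) (h n) = 0"
        using sum \<open>?L = ?R\<close> by (intro nonneg_has_sum_le_0D[OF sum]) (auto simp: clarkson_defect_sign p)
      then show "f n * h n = 0" using clarkson_defect_sign(2)[OF p(1)] p(2) by force
    qed
  qed
qed

lemma indicator_split_disjoint:
  fixes f h :: "'i \<Rightarrow> 'a :: idom"
  assumes "(\<lambda>n. f n + h n) = indicator {k}" and "\<forall>n. f n * h n = 0"
  shows "f = (\<lambda>n. 0) \<or> h = (\<lambda>n. 0)"
proof -
  have off: "f n = 0 \<and> h n = 0" if "n \<noteq> k" for n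
    using fun_cong[OF assms(1), of n] spec[OF assms(2), of n] that by auto
  from assms(2) have "f k = 0 \<or> h k = 0" by simp
  then show ?thesis
  proof
    assume "f k = 0"
    then have "f n = 0" for n using off by (cases "n = k") auto
    then show ?thesis by auto
  next
    assume "h k = 0"
    then have "h n = 0" for n using off by (cases "n = k") auto
    then show ?thesis by auto
  qed
qed

section \<open>The Mazur map\<close>

text \<open>A modulus of continuity of the Mazur map \<open>a \<mapsto> a\<^bsup>p/2\<^esup>\<close> on nonnegative unit vectors;
  for \<open>p > 2\<close> it results from the choice \<open>\<eta> = D\<^bsup>1/p\<^esup>\<close> in \<open>mazur_pointwise_gt\<close>
  (see \<open>mazur_modulus_gt_2\<close>).\<close>

definition mazur_modulus :: "real \<Rightarrow> real \<Rightarrow> real" where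
  "mazur_modulus p D = (if p \<le> 2 then D else 3 * (p / 2)\<^sup>2 * D powr (2 / p))"

lemma mazur_modulus_gt_2:
  assumes p: "p > 2" and D: "D > 0"
  shows "(p / 2)\<^sup>2 * ((D powr (1 / p)) powr (2 - p) * D + (D powr (1 / p))\<^sup>2 * (1 + 1))
    = mazur_modulus p D"
proof -
  have "(D powr (1 / p)) powr (2 - p) * D = D powr (1 / p * (2 - p)) * D powr 1"
    using D by (simp add: powr_powr)
  also have "\<dots> = D powr (1 / p * (2 - p) + 1)" by (rule powr_add[symmetric])
  also have "1 / p * (2 - p) + 1 = 2 / p" using p by (simp add: field_simps)
  finally have first: "(D powr (1 / p)) powr (2 - p) * D = D powr (2 / p)" .
  have "(D powr (1 / p))\<^sup>2 = (D powr (1 / p)) powr 2" using D by (simp add: powr_realpow)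
  also have "\<dots> = D powr (2 / p)" by (simp add: powr_powr)
  finally have second: "(D powr (1 / p))\<^sup>2 = D powr (2 / p)" .
  show ?thesis using p by (simp add: first second mazur_modulus_def)
qed

lemma mazur_modulus_tendsto_0:
  assumes "p > 0" "D \<longlonglongrightarrow> 0" "\<And>n. D n \<ge> 0"
  shows "(\<lambda>n. mazur_modulus p (D n)) \<longlonglongrightarrow> 0"
proof (cases "p \<le> 2")
  case False
  have "(\<lambda>n. D n powr (2 / p)) \<longlonglongrightarrow> 0"
    using assms by (intro tendsto_zero_powrI[where b = "2 / p"]) auto
  then have "(\<lambda>n. 3 * (p / 2)\<^sup>2 * D n powr (2 / p)) \<longlonglongrightarrow> 3 * (p / 2)\<^sup>2 * 0"
    by (intro tendsto_mult_left)
  with False show ?thesis by (simp add: mazur_modulus_def)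
qed (use assms in \<open>simp add: mazur_modulus_def\<close>)

lemma mazur_modulus_lp_sum_tendsto_0:
  assumes p: "p > 0" and "(\<lambda>n. lp_norm p (v n)) \<longlonglongrightarrow> 0"
  shows "(\<lambda>n. mazur_modulus p (lp_sum p (v n))) \<longlonglongrightarrow> 0"
proof (rule mazur_modulus_tendsto_0[OF p])
  have "(\<lambda>n. lp_norm p (v n) powr p) \<longlonglongrightarrow> 0"
    using assms by (intro tendsto_zero_powrI[where b = p]) (auto simp: lp_norm_eq_lp_sum_powr)
  then show "(\<lambda>n. lp_sum p (v n)) \<longlonglongrightarrow> 0" by (simp add: lp_norm_powr p)
qed (rule lp_sum_nonneg)

lemma mazur_summable:
  fixes a b :: "'a \<Rightarrow> real"
  assumes "(\<lambda>x. a x powr p) summable_on A" and "(\<lambda>x. b x powr p) summable_on A"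
  shows "(\<lambda>x. (a x powr (p / 2) - b x powr (p / 2))\<^sup>2) summable_on A"
proof -
  have bound: "(a x powr (p / 2) - b x powr (p / 2))\<^sup>2 \<le> 2 * (a x powr p + b x powr p)" for x
    using diff_square_le_2_sum[of "a x powr (p / 2)" "b x powr (p / 2)"]
    by (simp only: powr_half_square)
  have "(\<lambda>x. 2 * (a x powr p + b x powr p)) summable_on A"
    using assms by (intro summable_on_cmult_right summable_on_add)
  then show ?thesis by (rule summable_on_comparison_test) (auto simp: bound[unfolded distrib_left])
qed

lemma mazur_sum_le_gt_2:
  fixes a b :: "'a \<Rightarrow> real"
  assumes p: "p > 2" and nonneg: "\<And>x. a x \<ge> 0" "\<And>x. b x \<ge> 0"
    and a: "((\<lambda>x. a x powr p) has_sum 1) A" and b: "((\<lambda>x. b x powr p) has_sum 1) A"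
    and diff: "((\<lambda>x. \<bar>a x - b x\<bar> powr p) has_sum D\<^sub>0) A" and "D\<^sub>0 \<le> D"
  shows "infsum (\<lambda>x. (a x powr (p / 2) - b x powr (p / 2))\<^sup>2) A \<le> mazur_modulus p D"
proof -
  define E where "E = (\<lambda>x. (a x powr (p / 2) - b x powr (p / 2))\<^sup>2)"
  have "E summable_on A" unfolding E_def using a b by (intro mazur_summable) (auto simp: summable_on_def)
  then have E_sum: "(E has_sum infsum E A) A" by simp
  have "D\<^sub>0 \<ge> 0" by (rule has_sum_nonneg[OF diff]) simp
  show ?thesis
  proof (cases "D = 0")
    case True
    with \<open>D\<^sub>0 \<le> D\<close> \<open>D\<^sub>0 \<ge> 0\<close> have "\<bar>a x - b x\<bar> powr p = 0" if "x \<in> A" for x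
      by (intro nonneg_has_sum_le_0D[OF diff _ _ that]) auto
    then have "E x = 0" if "x \<in> A" for x using that by (simp add: E_def)
    then have "infsum E A = 0" by (rule infsum_0)
    with True show ?thesis by (simp add: E_def mazur_modulus_def)
  next
    case False
    with \<open>D\<^sub>0 \<le> D\<close> \<open>D\<^sub>0 \<ge> 0\<close> have D: "D > 0" by simp
    define \<eta> where "\<eta> = D powr (1 / p)"
    have \<eta>: "\<eta> > 0" using D by (simp add: \<eta>_def)
    have "E x \<le> (p / 2)\<^sup>2 * (\<eta> powr (2 - p) * \<bar>a x - b x\<bar> powr p + \<eta>\<^sup>2 * (a x powr p + b x powr p))"
      for x unfolding E_def using p nonneg \<eta> by (intro mazur_pointwise_gt) auto
    moreover have "((\<lambda>x. (p / 2)\<^sup>2 * (\<eta> powr (2 - p) * \<bar>a x - b x\<bar> powr p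
        + \<eta>\<^sup>2 * (a x powr p + b x powr p))) has_sum (p / 2)\<^sup>2 * (\<eta> powr (2 - p) * D\<^sub>0 + \<eta>\<^sup>2 * (1 + 1))) A"
      by (intro has_sum_cmult_right has_sum_add a b diff)
    ultimately have "infsum E A \<le> (p / 2)\<^sup>2 * (\<eta> powr (2 - p) * D\<^sub>0 + \<eta>\<^sup>2 * (1 + 1))"
      by (intro has_sum_mono[OF E_sum])
    also have "\<dots> \<le> (p / 2)\<^sup>2 * (\<eta> powr (2 - p) * D + \<eta>\<^sup>2 * (1 + 1))"
      using \<open>D\<^sub>0 \<le> D\<close> by (intro mult_left_mono add_right_mono) auto
    also have "\<dots> = mazur_modulus p D"
      using mazur_modulus_gt_2[OF p D] by (simp add: \<eta>_def)
    finally show ?thesis by (simp add: E_def)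
  qed
qed

lemma mazur_sum_le:
  fixes a b :: "'a \<Rightarrow> real"
  assumes p: "p > 0" and nonneg: "\<And>x. a x \<ge> 0" "\<And>x. b x \<ge> 0"
    and a: "((\<lambda>x. a x powr p) has_sum 1) A" and b: "((\<lambda>x. b x powr p) has_sum 1) A"
    and diff: "((\<lambda>x. \<bar>a x - b x\<bar> powr p) has_sum D\<^sub>0) A" and "D\<^sub>0 \<le> D"
  shows "infsum (\<lambda>x. (a x powr (p / 2) - b x powr (p / 2))\<^sup>2) A \<le> mazur_modulus p D"
proof (cases "p \<le> 2")
  case True
  have "(\<lambda>x. (a x powr (p / 2) - b x powr (p / 2))\<^sup>2) summable_on A"
    using a b by (intro mazur_summable) (auto simp: summable_on_def)
  then have "infsum (\<lambda>x. (a x powr (p / 2) - b x powr (p / 2))\<^sup>2) A \<le> D\<^sub>0"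
    using True p nonneg by (intro has_sum_mono[OF has_sum_infsum diff] mazur_pointwise_le) auto
  with True \<open>D\<^sub>0 \<le> D\<close> show ?thesis by (simp add: mazur_modulus_def)
next
  case False
  then show ?thesis using assms by (intro mazur_sum_le_gt_2) auto
qed
section \<open>Isometries of \<open>\<ell>\<^sub>p\<close>\<close>

locale lp_iso =
  fixes p :: real and T :: "(nat \<Rightarrow> complex) \<Rightarrow> nat \<Rightarrow> complex"
  assumes p_pos: "p > 0" and p_ne_2: "p \<noteq> 2" and isometry: "lp_isometry p T"
begin

lemma bij: "bij_betw T (lp_space p) (lp_space p)"
  using isometry by (simp add: lp_isometry_def)

lemma maps_lp: "f \<in> lp_space p \<Longrightarrow> T f \<in> lp_space p"
  using bij by (rule bij_betw_apply)

lemma inj: "f \<in> lp_space p \<Longrightarrow> h \<in> lp_space p \<Longrightarrow> T f = T h \<Longrightarrow> f = h"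
  using bij by (auto simp: bij_betw_def inj_on_def)

lemma surj: "h \<in> lp_space p \<Longrightarrow> \<exists>f\<in>lp_space p. T f = h"
  using bij by (metis bij_betw_def imageE)

lemma add: "f \<in> lp_space p \<Longrightarrow> h \<in> lp_space p \<Longrightarrow> T (\<lambda>n. f n + h n) = (\<lambda>n. T f n + T h n)"
  using isometry by (simp add: lp_isometry_def)

lemma scale: "f \<in> lp_space p \<Longrightarrow> T (\<lambda>n. c * f n) = (\<lambda>n. c * T f n)"
  using isometry by (simp add: lp_isometry_def)

lemma diff: "f \<in> lp_space p \<Longrightarrow> h \<in> lp_space p \<Longrightarrow> T (\<lambda>n. f n - h n) = (\<lambda>n. T f n - T h n)"
  using add[OF _ lp_space_scale, of f h "-1"] scale[of h "-1"] by simp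

lemma zero: "T (\<lambda>n. 0) = (\<lambda>n. 0)"
  using scale[of "\<lambda>n. 0" 0] by (simp add: lp_space_def)

lemma lp_sum_eq: "f \<in> lp_space p \<Longrightarrow> lp_sum p (T f) = lp_sum p f"
  using isometry lp_norm_eq_iff[OF p_pos] by (simp add: lp_isometry_def)

lemma disjoint_support_iff:
  assumes f: "f \<in> lp_space p" and h: "h \<in> lp_space p"
  shows "(\<forall>n. T f n * T h n = 0) \<longleftrightarrow> (\<forall>n. f n * h n = 0)"
  using lp_disjoint_support_iff[OF maps_lp[OF f] maps_lp[OF h] p_pos p_ne_2]
    lp_disjoint_support_iff[OF f h p_pos p_ne_2]
  by (simp add: add[OF f h, symmetric] diff[OF f h, symmetric] lp_sum_eq lp_space_add
      lp_space_diff f h p_pos)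

lemma single_support_image: "\<exists>j c. T (indicator {k}) = (\<lambda>n. c * indicator {j} n) \<and> cmod c = 1"
proof -
  define u where "u = T (indicator {k})"
  have u: "u \<in> lp_space p" unfolding u_def by (rule maps_lp[OF lp_space_indicator])
  have "u \<noteq> (\<lambda>n. 0)"
  proof
    assume "u = (\<lambda>n. 0)"
    then have "indicator {k} = (\<lambda>n::nat. 0::complex)"
      using inj[OF lp_space_indicator lp_space_scale[OF u, of 0]] zero u_def by simp
    then show False by (metis indicator_simps(1) singletonI zero_neq_one)
  qed
  then obtain j where j: "u j \<noteq> 0" by auto
  \<comment> \<open>otherwise \<open>u\<close> splits into two disjointly supported nonzero vectors, and so would \<open>indicator {k}\<close>\<close>
  have off: "u m = 0" if "m \<noteq> j" for m
  proof (rule ccontr)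
    assume m: "u m \<noteq> 0"
    define u1 where "u1 = (\<lambda>n. u j * indicator {j} n)"
    define u2 where "u2 = (\<lambda>n. u n - u1 n)"
    have u1: "u1 \<in> lp_space p" unfolding u1_def by (rule lp_space_scale[OF lp_space_indicator])
    have u2: "u2 \<in> lp_space p" unfolding u2_def by (rule lp_space_diff[OF u u1 p_pos])
    obtain v1 v2 where v: "v1 \<in> lp_space p" "T v1 = u1" "v2 \<in> lp_space p" "T v2 = u2"
      using surj[OF u1] surj[OF u2] by blast
    have "T (\<lambda>n. v1 n + v2 n) = T (indicator {k})"
      using add[OF v(1,3)] v by (simp add: u2_def u_def)
    then have "(\<lambda>n. v1 n + v2 n) = indicator {k}"
      using inj lp_space_add[OF v(1,3) p_pos] lp_space_indicator by blast
    moreover have "\<forall>n. u1 n * u2 n = 0" by (simp add: u1_def u2_def indicator_def)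
    then have "\<forall>n. v1 n * v2 n = 0" using disjoint_support_iff[OF v(1,3)] v by simp
    ultimately have "v1 = (\<lambda>n. 0) \<or> v2 = (\<lambda>n. 0)" by (rule indicator_split_disjoint)
    then have "u1 = (\<lambda>n. 0) \<or> u2 = (\<lambda>n. 0)" using v zero by auto
    then show False using j m that by (auto simp: u1_def u2_def dest: fun_cong[of _ _ j] fun_cong[of _ _ m])
  qed
  then have u_eq: "u = (\<lambda>n. u j * indicator {j} n)" by (auto simp: indicator_def)
  have "cmod (u j) powr p = 1"
    using lp_sum_eq[OF lp_space_indicator, of k] lp_sum_single[where c = "u j" and k = j]
      lp_sum_single[where c = 1 and k = k] u_eq unfolding u_def by simp
  moreover have "cmod (u j) = (cmod (u j) powr p) powr (1 / p)" using p_pos by (simp add: powr_powr)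
  ultimately have "cmod (u j) = 1" by simp
  with u_eq show ?thesis unfolding u_def by blast
qed

definition perm :: "nat \<Rightarrow> nat" where
  "perm k = (SOME j. T (indicator {k}) j \<noteq> 0)"

definition coef :: "nat \<Rightarrow> complex" where
  "coef k = T (indicator {k}) (perm k)"

lemma image_indicator: "T (indicator {k}) = (\<lambda>n. coef k * indicator {perm k} n)"
  and norm_coef: "cmod (coef k) = 1"
proof -
  obtain j c where jc: "T (indicator {k}) = (\<lambda>n. c * indicator {j} n)" "cmod c = 1"
    using single_support_image by blast
  then have "T (indicator {k}) j \<noteq> 0" by auto
  then have "T (indicator {k}) (perm k) \<noteq> 0" unfolding perm_def by (rule someI)
  then have "perm k = j" using jc by (auto simp: indicator_def split: if_splits)
  then show "T (indicator {k}) = (\<lambda>n. coef k * indicator {perm k} n)" "cmod (coef k) = 1"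
    using jc by (simp_all add: coef_def)
qed

lemma coef_nonzero: "coef k \<noteq> 0"
  using norm_coef[of k] by auto

lemma apply_perm:
  assumes f: "f \<in> lp_space p"
  shows "T f (perm k) = coef k * f k"
proof -
  define r where "r = (\<lambda>n. f n - f k * indicator {k} n)"
  have ind: "indicator {k} \<in> lp_space p" and fk: "(\<lambda>n. f k * indicator {k} n) \<in> lp_space p"
    using lp_space_indicator by (auto intro: lp_space_scale)
  have r: "r \<in> lp_space p" unfolding r_def by (rule lp_space_diff[OF f fk p_pos])
  have "\<forall>n. r n * indicator {k} n = 0" by (simp add: r_def indicator_def)
  then have "\<forall>n. T r n * T (indicator {k}) n = 0" using disjoint_support_iff[OF r ind] by simp
  then have r_perm: "T r (perm k) = 0"
    using image_indicator[of k] norm_coef[of k] by (auto dest: spec[of _ "perm k"])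
  have "T f = T (\<lambda>n. r n + f k * indicator {k} n)" by (simp add: r_def)
  also have "\<dots> = (\<lambda>n. T r n + f k * T (indicator {k}) n)" using add[OF r fk] scale[OF ind] by simp
  finally show ?thesis using r_perm image_indicator by simp
qed

lemma bij_perm: "bij perm"
proof (rule bijI)
  show "inj perm"
  proof (rule injI)
    fix k k' assume eq: "perm k = perm k'"
    show "k = k'"
    proof (rule ccontr)
      assume "k \<noteq> k'"
      then have "\<forall>n. indicator {k} n * indicator {k'} n = (0::complex)" by (simp add: indicator_def)
      then have "\<forall>n. T (indicator {k}) n * T (indicator {k'}) n = 0"
        using disjoint_support_iff lp_space_indicator by blast
      then have "T (indicator {k}) (perm k) * T (indicator {k'}) (perm k) = 0" by blast
      then show False using eq coef_nonzero by (simp add: image_indicator)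
    qed
  qed
  show "surj perm"
  proof -
    have "j \<in> range perm" for j
    proof -
      obtain v where v: "v \<in> lp_space p" "T v = indicator {j}"
        using surj[OF lp_space_indicator] by blast
      have "v \<noteq> (\<lambda>n. 0)" using v zero by (metis indicator_simps(1) singletonI zero_neq_one)
      then obtain k where "v k \<noteq> 0" by auto
      then have "T v (perm k) \<noteq> 0" using apply_perm[OF v(1)] norm_coef[of k] by auto
      then have "perm k = j" using v by (simp add: indicator_def split: if_splits)
      then show ?thesis by blast
    qed
    then show ?thesis by blast
  qed
qed

lemma has_sum_perm: "((\<lambda>x. f (perm x)) has_sum S) UNIV \<longleftrightarrow> (f has_sum S) UNIV"
  using bij_perm by (intro has_sum_reindex_bij_betw) (simp add: bij_def bij_betw_def)

lemma mazur_displacement: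
  assumes u: "u \<in> lp_space p" and u_unit: "lp_sum p u = 1"
  defines "E \<equiv> \<lambda>x. (cmod (u (perm x)) powr (p / 2) - cmod (u x) powr (p / 2))\<^sup>2"
  shows "E summable_on UNIV" and "infsum E UNIV \<le> mazur_modulus p (lp_sum p (\<lambda>k. T u k - u k))"
proof -
  define w where "w = (\<lambda>k. T u k - u k)"
  have w: "w \<in> lp_space p" unfolding w_def by (rule lp_space_diff[OF maps_lp[OF u] u p_pos])
  have b: "((\<lambda>x. cmod (u x) powr p) has_sum 1) UNIV"
    using lp_sum_has_sum[OF u] u_unit by simp
  then have a: "((\<lambda>x. cmod (u (perm x)) powr p) has_sum 1) UNIV"
    by (rule has_sum_perm[THEN iffD2])
  have w_perm: "((\<lambda>x. cmod (w (perm x)) powr p) has_sum lp_sum p w) UNIV"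
    using lp_sum_has_sum[OF w] by (rule has_sum_perm[THEN iffD2])
  have pointwise: "\<bar>cmod (u (perm x)) - cmod (u x)\<bar> powr p \<le> cmod (w (perm x)) powr p" for x
  proof -
    have "w (perm x) = coef x * u x - u (perm x)" by (simp add: w_def apply_perm[OF u])
    moreover have "cmod (coef x * u x) = cmod (u x)" by (simp add: norm_mult norm_coef)
    ultimately have "\<bar>cmod (u (perm x)) - cmod (u x)\<bar> \<le> cmod (w (perm x))"
      by (metis abs_minus_commute norm_triangle_ineq3)
    then show ?thesis using p_pos by (intro powr_mono2) auto
  qed
  have "(\<lambda>x. \<bar>cmod (u (perm x)) - cmod (u x)\<bar> powr p) summable_on UNIV"
    using w_perm by (intro summable_on_comparison_test[OF _ pointwise]) (auto simp: summable_on_def)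
  then have diff: "((\<lambda>x. \<bar>cmod (u (perm x)) - cmod (u x)\<bar> powr p)
      has_sum infsum (\<lambda>x. \<bar>cmod (u (perm x)) - cmod (u x)\<bar> powr p) UNIV) UNIV"
    by simp
  have "infsum (\<lambda>x. \<bar>cmod (u (perm x)) - cmod (u x)\<bar> powr p) UNIV \<le> lp_sum p w"
    using diff w_perm pointwise by (rule has_sum_mono)
  from mazur_sum_le[OF p_pos _ _ a b diff this]
  show "infsum E UNIV \<le> mazur_modulus p (lp_sum p (\<lambda>k. T u k - u k))"
    by (simp add: E_def w_def)
  show "E summable_on UNIV"
    unfolding E_def using a b by (intro mazur_summable) (auto simp: summable_on_def)
qed

end

lemma group_action_restrict:
  assumes G: "group G"
    and bij: "\<And>g. g \<in> carrier G \<Longrightarrow> bij_betw (\<psi> g) X X"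
    and mult: "\<And>g h x. g \<in> carrier G \<Longrightarrow> h \<in> carrier G \<Longrightarrow> x \<in> X \<Longrightarrow>
      \<psi> (g \<otimes>\<^bsub>G\<^esub> h) x = \<psi> g (\<psi> h x)"
  shows "group_action G X (\<lambda>g. restrict (\<psi> g) X)"
proof -
  have Bij: "restrict (\<psi> g) X \<in> Bij X" if "g \<in> carrier G" for g
    using bij[OF that] by (auto simp: Bij_def bij_betw_def inj_on_def)
  have "(\<lambda>g. restrict (\<psi> g) X) \<in> hom G (BijGroup X)"
  proof (rule homI)
    fix g h assume g: "g \<in> carrier G" and h: "h \<in> carrier G"
    have "restrict (\<psi> (g \<otimes>\<^bsub>G\<^esub> h)) X = compose X (restrict (\<psi> g) X) (restrict (\<psi> h) X)"
      using bij[OF h] mult[OF g h] by (auto simp: compose_def bij_betw_def fun_eq_iff)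
    then show "restrict (\<psi> (g \<otimes>\<^bsub>G\<^esub> h)) X = restrict (\<psi> g) X \<otimes>\<^bsub>BijGroup X\<^esub> restrict (\<psi> h) X"
      using Bij[OF g] Bij[OF h] by (simp add: BijGroup_def)
  qed (use Bij in \<open>simp add: BijGroup_def\<close>)
  then show ?thesis
    unfolding group_action_def group_hom_def by (simp add: G group_BijGroup group_hom_axioms.intro)
qed

text \<open>Summability of the deviations
  is required explicitly, since \<open>infsum\<close> is \<open>0\<close> on non-summable families.\<close>

definition has_almost_invariant_vectors ::
    "('g, 'b) monoid_scheme \<Rightarrow> 'a set \<Rightarrow> ('g \<Rightarrow> 'a \<Rightarrow> 'a) \<Rightarrow> bool" where
  "has_almost_invariant_vectors G A \<psi> \<longleftrightarrow>
     (\<forall>F \<epsilon>. finite F \<and> F \<subseteq> carrier G \<and> \<epsilon> > 0 \<longrightarrow>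
       (\<exists>u :: 'a \<Rightarrow> real. ((\<lambda>x. (u x)\<^sup>2) has_sum 1) A \<and>
          (\<forall>g\<in>F. (\<lambda>x. (u (\<psi> (inv\<^bsub>G\<^esub> g) x) - u x)\<^sup>2) summable_on A \<and>
                  infsum (\<lambda>x. (u (\<psi> (inv\<^bsub>G\<^esub> g) x) - u x)\<^sup>2) A < \<epsilon>)))"

lemma amenable_action_if_almost_invariant:
  fixes \<psi> :: "'g \<Rightarrow> nat \<Rightarrow> nat"
  assumes G: "group G" and action: "group_action G X (\<lambda>g. restrict (\<psi> g) X)"
    and almost_inv: "has_almost_invariant_vectors G X \<psi>"
  shows "amenable_action G X (\<lambda>g. restrict (\<psi> g) X)"
  unfolding amenable_action_def
proof (intro conjI allI impI action)
  fix F \<epsilon> assume F\<epsilon>: "finite F \<and> F \<subseteq> carrier G \<and> (\<epsilon>::real) > 0"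
  then obtain u where u: "((\<lambda>x. (u x)\<^sup>2) has_sum 1) X"
    and small: "\<And>g. g \<in> F \<Longrightarrow> (\<lambda>x. (u (\<psi> (inv\<^bsub>G\<^esub> g) x) - u x)\<^sup>2) summable_on X \<and>
                  infsum (\<lambda>x. (u (\<psi> (inv\<^bsub>G\<^esub> g) x) - u x)\<^sup>2) X < \<epsilon>\<^sup>2"
    using almost_inv[unfolded has_almost_invariant_vectors_def, rule_format, of F "\<epsilon>\<^sup>2"] by auto
  define f where "f x = complex_of_real (u x)" for x
  have "l2_vec X f" "l2_norm X f = 1"
    using u by (auto simp: l2_vec_def l2_norm_def f_def summable_on_def infsumI)
  moreover have "l2_norm X (\<lambda>x. perm_rep G (\<lambda>g. restrict (\<psi> g) X) g f x - f x) < \<epsilon>"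
    if g: "g \<in> F" for g
  proof -
    have "inv\<^bsub>G\<^esub> g \<in> carrier G" using F\<epsilon> g G by (auto intro: group.inv_closed)
    have "infsum (\<lambda>x. (cmod (perm_rep G (\<lambda>g. restrict (\<psi> g) X) g f x - f x))\<^sup>2) X
        = infsum (\<lambda>x. (u (\<psi> (inv\<^bsub>G\<^esub> g) x) - u x)\<^sup>2) X"
      by (rule infsum_cong) (simp add: perm_rep_def f_def flip: of_real_diff)
    also have "\<dots> < \<epsilon>\<^sup>2" using small[OF g] by blast
    finally have "sqrt (infsum (\<lambda>x. (cmod (perm_rep G (\<lambda>g. restrict (\<psi> g) X) g f x - f x))\<^sup>2) X)
        < sqrt (\<epsilon>\<^sup>2)"
      by (rule real_sqrt_less_mono)
    then show ?thesis unfolding l2_norm_def using F\<epsilon> by simp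
  qed
  ultimately show "\<exists>f. l2_vec X f \<and> l2_norm X f = 1 \<and>
      (\<forall>g\<in>F. l2_norm X (\<lambda>x. perm_rep G (\<lambda>g. restrict (\<psi> g) X) g f x - f x) < \<epsilon>)"
    by (intro exI[of _ f]) simp
qed

lemma has_almost_invariant_vectors_transfer:
  assumes G: "group G" and enc: "bij_betw enc A X"
    and maps: "\<And>g a. g \<in> carrier G \<Longrightarrow> a \<in> A \<Longrightarrow> \<psi> g a \<in> A"
    and compat: "\<And>g a. g \<in> carrier G \<Longrightarrow> a \<in> A \<Longrightarrow> \<rho> g (enc a) = enc (\<psi> g a)"
    and almost_inv: "has_almost_invariant_vectors G A \<psi>"
  shows "has_almost_invariant_vectors G X \<rho>"
  unfolding has_almost_invariant_vectors_def
proof (intro allI impI)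
  define dec where "dec = inv_into A enc"
  have dec_enc: "dec (enc a) = a" if "a \<in> A" for a
    using enc that by (simp add: dec_def bij_betw_inv_into_left)
  have dec: "bij_betw dec X A" unfolding dec_def using enc by (rule bij_betw_inv_into)
  fix F \<epsilon> assume F\<epsilon>: "finite F \<and> F \<subseteq> carrier G \<and> (\<epsilon>::real) > 0"
  then obtain u where u: "((\<lambda>a. (u a)\<^sup>2) has_sum 1) A"
    and small: "\<And>g. g \<in> F \<Longrightarrow> (\<lambda>a. (u (\<psi> (inv\<^bsub>G\<^esub> g) a) - u a)\<^sup>2) summable_on A \<and>
                  infsum (\<lambda>a. (u (\<psi> (inv\<^bsub>G\<^esub> g) a) - u a)\<^sup>2) A < \<epsilon>"
    using almost_inv[unfolded has_almost_invariant_vectors_def, rule_format, of F \<epsilon>] by auto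
  have deviation: "(u (dec (\<rho> (inv\<^bsub>G\<^esub> g) x)) - u (dec x))\<^sup>2
      = (\<lambda>a. (u (\<psi> (inv\<^bsub>G\<^esub> g) a) - u a)\<^sup>2) (dec x)" if "g \<in> F" "x \<in> X" for g x
  proof -
    have "inv\<^bsub>G\<^esub> g \<in> carrier G" using F\<epsilon> that G by (auto intro: group.inv_closed)
    moreover obtain a where "a \<in> A" "x = enc a" using \<open>x \<in> X\<close> enc by (auto simp: bij_betw_def)
    ultimately show ?thesis by (simp add: compat dec_enc maps)
  qed
  show "\<exists>v. ((\<lambda>x. (v x)\<^sup>2) has_sum 1) X \<and>
      (\<forall>g\<in>F. (\<lambda>x. (v (\<rho> (inv\<^bsub>G\<^esub> g) x) - v x)\<^sup>2) summable_on X \<and>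
              infsum (\<lambda>x. (v (\<rho> (inv\<^bsub>G\<^esub> g) x) - v x)\<^sup>2) X < \<epsilon>)"
  proof (intro exI[of _ "\<lambda>x. u (dec x)"] conjI ballI)
    show "((\<lambda>x. (u (dec x))\<^sup>2) has_sum 1) X"
      using u has_sum_reindex_bij_betw[OF dec, of "\<lambda>a. (u a)\<^sup>2" 1] by simp
    fix g assume g: "g \<in> F"
    have "(\<lambda>x. (u (dec (\<rho> (inv\<^bsub>G\<^esub> g) x)) - u (dec x))\<^sup>2) summable_on X
        \<longleftrightarrow> (\<lambda>x. (\<lambda>a. (u (\<psi> (inv\<^bsub>G\<^esub> g) a) - u a)\<^sup>2) (dec x)) summable_on X"
      by (rule summable_on_cong) (rule deviation[OF g])
    with small[OF g] show "(\<lambda>x. (u (dec (\<rho> (inv\<^bsub>G\<^esub> g) x)) - u (dec x))\<^sup>2) summable_on X"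
      using summable_on_reindex_bij_betw[OF dec, of "\<lambda>a. (u (\<psi> (inv\<^bsub>G\<^esub> g) a) - u a)\<^sup>2"] by simp
    have "infsum (\<lambda>x. (u (dec (\<rho> (inv\<^bsub>G\<^esub> g) x)) - u (dec x))\<^sup>2) X
        = infsum (\<lambda>x. (\<lambda>a. (u (\<psi> (inv\<^bsub>G\<^esub> g) a) - u a)\<^sup>2) (dec x)) X"
      by (rule infsum_cong) (rule deviation[OF g])
    with small[OF g] show "infsum (\<lambda>x. (u (dec (\<rho> (inv\<^bsub>G\<^esub> g) x)) - u (dec x))\<^sup>2) X < \<epsilon>"
      using infsum_reindex_bij_betw[OF dec, of "\<lambda>a. (u (\<psi> (inv\<^bsub>G\<^esub> g) a) - u a)\<^sup>2"] by simp
  qed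
qed

lemma property_F_fixed_point:
  fixes \<psi> :: "'g \<Rightarrow> 'a \<Rightarrow> 'a"
  assumes G: "group G" and F: "property_F G" and A: "countable A"
    and bij: "\<And>g. g \<in> carrier G \<Longrightarrow> bij_betw (\<psi> g) A A"
    and mult: "\<And>g h x. g \<in> carrier G \<Longrightarrow> h \<in> carrier G \<Longrightarrow> x \<in> A \<Longrightarrow>
      \<psi> (g \<otimes>\<^bsub>G\<^esub> h) x = \<psi> g (\<psi> h x)"
    and almost_inv: "has_almost_invariant_vectors G A \<psi>"
  shows "\<exists>x\<in>A. \<forall>g\<in>carrier G. \<psi> g x = x"
proof -
  \<comment> \<open>transport the action to a subset \<open>X\<close> of \<open>\<nat>\<close>, as required by \<open>property_F\<close>\<close>
  define enc where "enc = to_nat_on A"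
  define dec where "dec = from_nat_into A"
  define X where "X = enc ` A"
  define \<rho> where "\<rho> = (\<lambda>g x. enc (\<psi> g (dec x)))"
  have dec_enc: "dec (enc a) = a" if "a \<in> A" for a using A that by (simp add: enc_def dec_def)
  have enc_bij: "bij_betw enc A X" using A by (simp add: X_def enc_def bij_betw_def inj_on_to_nat_on)
  have dec_X: "dec x \<in> A" "enc (dec x) = x" if "x \<in> X" for x
    using that dec_enc by (auto simp: X_def)
  have dec_bij: "bij_betw dec X A"
    by (rule bij_betw_byWitness[where f' = enc]) (use dec_X dec_enc in \<open>auto simp: X_def\<close>)
  have "group_action G X (\<lambda>g. restrict (\<rho> g) X)"
  proof (rule group_action_restrict[OF G])
    show "bij_betw (\<rho> g) X X" if "g \<in> carrier G" for g
      using bij_betw_trans[OF bij_betw_trans[OF dec_bij bij[OF that]] enc_bij]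
      by (simp add: \<rho>_def o_def)
    show "\<rho> (g \<otimes>\<^bsub>G\<^esub> h) x = \<rho> g (\<rho> h x)" if "g \<in> carrier G" "h \<in> carrier G" "x \<in> X" for g h x
      using that bij_betw_apply[OF bij[OF that(2)]] by (simp add: \<rho>_def dec_X dec_enc mult)
  qed
  moreover have "has_almost_invariant_vectors G X \<rho>"
  proof (rule has_almost_invariant_vectors_transfer[OF G enc_bij _ _ almost_inv])
    show "\<psi> g a \<in> A" if "g \<in> carrier G" "a \<in> A" for g a using bij_betw_apply[OF bij] that by blast
    show "\<rho> g (enc a) = enc (\<psi> g a)" if "g \<in> carrier G" "a \<in> A" for g a
      using that by (simp add: \<rho>_def dec_enc)
  qed
  ultimately have "amenable_action G X (\<lambda>g. restrict (\<rho> g) X)"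
    by (intro amenable_action_if_almost_invariant[OF G])
  from F[unfolded property_F_def, rule_format, OF this] obtain x
    where "x \<in> X" and "\<forall>g\<in>carrier G. restrict (\<rho> g) X x = x" ..
  then have fixed: "enc (\<psi> g (dec x)) = x" if "g \<in> carrier G" for g using that by (simp add: \<rho>_def)
  show ?thesis
  proof (intro bexI ballI)
    show "dec x \<in> A" using dec_X \<open>x \<in> X\<close> by blast
    fix g assume g: "g \<in> carrier G"
    have "enc (\<psi> g (dec x)) = enc (dec x)" using fixed[OF g] dec_X \<open>x \<in> X\<close> by simp
    then show "\<psi> g (dec x) = dec x"
      by (rule inj_onD[OF bij_betw_imp_inj_on[OF enc_bij]])
        (use bij_betw_apply[OF bij[OF g]] \<open>dec x \<in> A\<close> in auto)
  qed
qed

section \<open>Characters of groups with Property (F)\<close>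

lemma card_fibers_sum:
  assumes "finite S" "finite W" "f ` S \<subseteq> W"
  shows "(\<Sum>w\<in>W. card {x\<in>S. f x = w}) = card S"
  using sum.group[OF assms, of "\<lambda>_. 1::nat"] by (simp add: card_eq_sum[symmetric])

lemma fibers_diff_sum_le:
  assumes B: "finite B" and B': "finite B'" and W: "finite W" and sub: "f ` (B \<union> B') \<subseteq> W"
  shows "(\<Sum>w\<in>W. \<bar>real (card {x\<in>B'. f x = w}) - real (card {x\<in>B. f x = w})\<bar>)
    \<le> real (card (B' - B)) + real (card (B - B'))"
proof -
  have split: "card {x\<in>S. f x = w} = card {x\<in>S \<inter> T. f x = w} + card {x\<in>S - T. f x = w}"
    if "finite S" for S T w
  proof -
    have "{x\<in>S. f x = w} = {x\<in>S \<inter> T. f x = w} \<union> {x\<in>S - T. f x = w}" by auto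
    then show ?thesis using that by (simp add: card_Un_disjoint[symmetric] disjoint_iff)
  qed
  have "\<bar>real (card {x\<in>B'. f x = w}) - real (card {x\<in>B. f x = w})\<bar>
      \<le> real (card {x\<in>B' - B. f x = w}) + real (card {x\<in>B - B'. f x = w})" for w
    using split[OF B', where T = B and w = w] split[OF B, where T = B' and w = w] by (simp add: Int_commute)
  then have "(\<Sum>w\<in>W. \<bar>real (card {x\<in>B'. f x = w}) - real (card {x\<in>B. f x = w})\<bar>)
      \<le> (\<Sum>w\<in>W. real (card {x\<in>B' - B. f x = w})) + (\<Sum>w\<in>W. real (card {x\<in>B - B'. f x = w}))"
    by (simp add: sum.distrib[symmetric] sum_mono)
  also have "\<dots> = real (card (B' - B)) + real (card (B - B'))"
  proof -
    have "(\<Sum>w\<in>W. card {x\<in>B' - B. f x = w}) = card (B' - B)"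
      by (rule card_fibers_sum) (use B' W sub in auto)
    moreover have "(\<Sum>w\<in>W. card {x\<in>B - B'. f x = w}) = card (B - B')"
      by (rule card_fibers_sum) (use B W sub in auto)
    ultimately show ?thesis by (simp only: of_nat_sum[symmetric])
  qed
  finally show ?thesis .
qed

lemma card_box_slice:
  assumes "finite F" "g \<in> F" "k < N"
  shows "card {e \<in> PiE F (\<lambda>_. {..<N}). e g = k} = N ^ (card F - 1)"
proof -
  have "{e \<in> PiE F (\<lambda>_. {..<N}). e g = k} = PiE F (\<lambda>h. if h = g then {k} else {..<N})"
    using assms by (auto simp: PiE_iff extensional_def split: if_splits)
  then have "card {e \<in> PiE F (\<lambda>_. {..<N}). e g = k} = (\<Prod>h\<in>F. card (if h = g then {k} else {..<N}))"
    using assms(1) by (simp add: card_PiE)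
  also have "\<dots> = (\<Prod>h\<in>F - {g}. N)"
    using prod.remove[OF assms(1,2), of "\<lambda>h. card (if h = g then {k} else {..<N})"] by simp
  also have "\<dots> = N ^ (card F - 1)" using assms by (simp add: card_Diff_singleton)
  finally show ?thesis .
qed

lemma box_shift_card_diff:
  assumes F: "finite F" and g: "g \<in> F" and N: "N > 0"
  defines "B \<equiv> PiE F (\<lambda>_. {..<N})" and "B' \<equiv> (\<lambda>e. e(g := Suc (e g))) ` PiE F (\<lambda>_. {..<N})"
  shows "card (B' - B) \<le> N ^ (card F - 1)" and "card (B - B') \<le> N ^ (card F - 1)"
proof -
  have fin: "finite B" using F by (simp add: B_def finite_PiE)
  have "B' - B \<subseteq> (\<lambda>e. e(g := Suc (e g))) ` {e \<in> B. e g = N - 1}"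
  proof
    fix x assume x: "x \<in> B' - B"
    then obtain e where e: "e \<in> B" "x = e(g := Suc (e g))" by (auto simp: B'_def B_def)
    have "e g < N" using e g by (auto simp: B_def)
    moreover have "\<not> Suc (e g) < N"
      using e x g by (auto simp: B_def PiE_iff extensional_def split: if_splits)
    ultimately have "e g = N - 1" by simp
    with e show "x \<in> (\<lambda>e. e(g := Suc (e g))) ` {e \<in> B. e g = N - 1}"
      by (intro image_eqI[where x = e]) auto
  qed
  then have "card (B' - B) \<le> card ((\<lambda>e. e(g := Suc (e g))) ` {e \<in> B. e g = N - 1})"
    using fin by (intro card_mono) auto
  also have "\<dots> \<le> card {e \<in> B. e g = N - 1}" using fin by (intro card_image_le) auto
  finally show "card (B' - B) \<le> N ^ (card F - 1)"
    using card_box_slice[OF F g, of "N - 1"] N by (simp add: B_def)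
  have "B - B' \<subseteq> {e \<in> B. e g = 0}"
  proof
    fix e assume e: "e \<in> B - B'"
    have "e g = 0"
    proof (rule ccontr)
      assume "e g \<noteq> 0"
      then have "e(g := e g - 1) \<in> B" and "e = (e(g := e g - 1))(g := Suc ((e(g := e g - 1)) g))"
        using e g by (auto simp: B_def PiE_iff extensional_def)
      then have "e \<in> B'" unfolding B'_def B_def by (intro image_eqI[where x = "e(g := e g - 1)"]) auto
      then show False using e by simp
    qed
    then show "e \<in> {e \<in> B. e g = 0}" using e by simp
  qed
  then have "card (B - B') \<le> card {e \<in> B. e g = 0}" using fin by (intro card_mono) auto
  then show "card (B - B') \<le> N ^ (card F - 1)" using card_box_slice[OF F g N] by (simp add: B_def)
qed

lemma box_product_shift_fibers:
  fixes c :: "'g \<Rightarrow> 'a :: comm_monoid_mult"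
  assumes F: "finite F" and g: "g \<in> F" and N: "N > 0" and W: "finite W"
  defines "B \<equiv> PiE F (\<lambda>_. {..<N})" and "pr \<equiv> \<lambda>e. \<Prod>h\<in>F. c h ^ e h"
  assumes sub: "pr ` B \<union> (\<lambda>e. c g * pr e) ` B \<subseteq> W"
  shows "(\<Sum>w\<in>W. \<bar>real (card {e\<in>B. c g * pr e = w}) - real (card {e\<in>B. pr e = w})\<bar>)
    \<le> 2 * real N ^ (card F - 1)"
proof -
  define shift where "shift e = e(g := Suc (e g))" for e :: "'g \<Rightarrow> nat"
  define B' where "B' = shift ` B"
  have pr_shift: "pr (shift e) = c g * pr e" for e
  proof -
    have "pr (shift e) = c g ^ shift e g * (\<Prod>h\<in>F - {g}. c h ^ shift e h)"
      unfolding pr_def by (rule prod.remove[OF F g])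
    also have "shift e g = Suc (e g)" by (simp add: shift_def)
    also have "(\<Prod>h\<in>F - {g}. c h ^ shift e h) = (\<Prod>h\<in>F - {g}. c h ^ e h)"
      by (rule prod.cong) (auto simp: shift_def)
    also have "c g ^ Suc (e g) * \<dots> = c g * pr e"
      unfolding pr_def using prod.remove[OF F g, of "\<lambda>h. c h ^ e h"] by (simp add: mult.assoc)
    finally show ?thesis .
  qed
  have "inj shift" by (rule injI) (auto simp: shift_def fun_eq_iff split: if_splits)
  then have fibers: "card {e\<in>B. c g * pr e = w} = card {x\<in>B'. pr x = w}" for w
  proof -
    have "{x\<in>B'. pr x = w} = shift ` {e\<in>B. c g * pr e = w}" by (auto simp: B'_def pr_shift)
    then show ?thesis using \<open>inj shift\<close> by (simp add: card_image inj_on_subset)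
  qed
  have fin: "finite B" "finite B'" using F by (simp_all add: B_def B'_def finite_PiE)
  have "pr ` (B \<union> B') \<subseteq> W" using sub by (auto simp: B'_def pr_shift)
  then have "(\<Sum>w\<in>W. \<bar>real (card {e\<in>B. c g * pr e = w}) - real (card {e\<in>B. pr e = w})\<bar>)
      \<le> real (card (B' - B)) + real (card (B - B'))"
    unfolding fibers using fin W by (intro fibers_diff_sum_le)
  also have "\<dots> \<le> real (N ^ (card F - 1)) + real (N ^ (card F - 1))"
    using box_shift_card_diff[OF F g N] unfolding B_def B'_def shift_def
    by (intro add_mono) (simp_all only: of_nat_le_iff)
  finally show ?thesis by simp
qed

text \<open>Multiplying
  by \<open>c\<^sub>g\<close> shifts the box along the \<open>g\<close>-axis, which moves only the mass of two faces: these
  are Folner sets for the abelian group generated by the \<open>c\<^sub>h\<close>.\<close>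

definition box_distribution :: "('g \<Rightarrow> 'a :: comm_monoid_mult) \<Rightarrow> 'g set \<Rightarrow> nat \<Rightarrow> 'a \<Rightarrow> real" where
  "box_distribution c F N w =
     real (card {e \<in> PiE F (\<lambda>_. {..<N}). (\<Prod>h\<in>F. c h ^ e h) = w}) / real N ^ card F"

lemma box_distribution_nonneg: "box_distribution c F N w \<ge> 0"
  by (simp add: box_distribution_def)

lemma box_distribution_outside:
  assumes "w \<notin> (\<lambda>e. \<Prod>h\<in>F. c h ^ e h) ` PiE F (\<lambda>_. {..<N})"
  shows "box_distribution c F N w = 0"
proof -
  have empty: "{e \<in> PiE F (\<lambda>_. {..<N}). (\<Prod>h\<in>F. c h ^ e h) = w} = {}" using assms by auto
  show ?thesis unfolding box_distribution_def empty by simp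
qed

lemma box_distribution_sum:
  assumes "finite F" "N > 0"
  shows "(\<Sum>w \<in> (\<lambda>e. \<Prod>h\<in>F. c h ^ e h) ` PiE F (\<lambda>_. {..<N}). box_distribution c F N w) = 1"
proof -
  have "(\<Sum>w \<in> (\<lambda>e. \<Prod>h\<in>F. c h ^ e h) ` PiE F (\<lambda>_. {..<N}).
      card {e \<in> PiE F (\<lambda>_. {..<N}). (\<Prod>h\<in>F. c h ^ e h) = w}) = card (PiE F (\<lambda>_. {..<N}))"
    using assms by (intro card_fibers_sum) (auto simp: finite_PiE)
  then show ?thesis
    using assms by (simp add: box_distribution_def card_PiE flip: sum_divide_distrib of_nat_sum)
qed

lemma box_distribution_shift:
  assumes F: "finite F" and g: "g \<in> F" and N: "N > 0" and inverse: "c' * c g = 1"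
  defines "S \<equiv> (\<lambda>e. \<Prod>h\<in>F. c h ^ e h) ` PiE F (\<lambda>_. {..<N})"
  assumes W: "finite W" and sub: "S \<union> (\<lambda>x. c g * x) ` S \<subseteq> W"
  shows "(\<Sum>w\<in>W. \<bar>box_distribution c F N (c' * w) - box_distribution c F N w\<bar>) \<le> 2 / N"
proof -
  define B where "B = PiE F (\<lambda>_. {..<N})"
  define pr where "pr e = (\<Prod>h\<in>F. c h ^ e h)" for e
  define K where "K = real N ^ card F"
  obtain m where m: "card F = Suc m" using g F by (metis card_gt_0_iff empty_iff gr0_implies_Suc)
  have shift_iff: "(\<Prod>h\<in>F. c h ^ e h) = c' * w \<longleftrightarrow> c g * (\<Prod>h\<in>F. c h ^ e h) = w" for e w
    using inverse by (metis mult.assoc mult.commute mult_1)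
  have "\<bar>box_distribution c F N (c' * w) - box_distribution c F N w\<bar>
      = \<bar>real (card {e\<in>B. c g * pr e = w}) - real (card {e\<in>B. pr e = w})\<bar> / K" for w
    using N by (simp add: box_distribution_def B_def pr_def K_def shift_iff abs_divide
        flip: diff_divide_distrib)
  then have "(\<Sum>w\<in>W. \<bar>box_distribution c F N (c' * w) - box_distribution c F N w\<bar>)
      = (\<Sum>w\<in>W. \<bar>real (card {e\<in>B. c g * pr e = w}) - real (card {e\<in>B. pr e = w})\<bar>) / K"
    by (simp add: sum_divide_distrib)
  also have "\<dots> \<le> 2 * real N ^ (card F - 1) / K"
  proof (rule divide_right_mono)
    show "(\<Sum>w\<in>W. \<bar>real (card {e\<in>B. c g * pr e = w}) - real (card {e\<in>B. pr e = w})\<bar>)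
        \<le> 2 * real N ^ (card F - 1)"
      using sub unfolding B_def pr_def S_def by (intro box_product_shift_fibers[OF F g N W]) auto
  qed (simp add: K_def)
  also have "\<dots> = 2 / N" using N by (simp add: K_def m)
  finally show ?thesis .
qed

lemma hom_image_mult_closed:
  fixes \<theta> :: "'g \<Rightarrow> 'a :: monoid_mult"
  assumes G: "monoid G"
    and hom: "\<And>g h. g \<in> carrier G \<Longrightarrow> h \<in> carrier G \<Longrightarrow> \<theta> (g \<otimes>\<^bsub>G\<^esub> h) = \<theta> g * \<theta> h"
    and "x \<in> \<theta> ` carrier G" "y \<in> \<theta> ` carrier G"
  shows "x * y \<in> \<theta> ` carrier G"
proof -
  obtain g h where gh: "g \<in> carrier G" "h \<in> carrier G" "x = \<theta> g" "y = \<theta> h"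
    using assms(3,4) by blast
  then have "g \<otimes>\<^bsub>G\<^esub> h \<in> carrier G" by (simp add: monoid.m_closed[OF G])
  moreover have "x * y = \<theta> (g \<otimes>\<^bsub>G\<^esub> h)" using gh hom by simp
  ultimately show ?thesis by (rule rev_image_eqI)
qed

lemma hom_image_prod_powers:
  fixes \<theta> :: "'g \<Rightarrow> 'a :: comm_monoid_mult"
  assumes G: "monoid G"
    and hom: "\<And>g h. g \<in> carrier G \<Longrightarrow> h \<in> carrier G \<Longrightarrow> \<theta> (g \<otimes>\<^bsub>G\<^esub> h) = \<theta> g * \<theta> h"
    and one: "\<theta> \<one>\<^bsub>G\<^esub> = 1"
    and "finite T" "T \<subseteq> carrier G"
  shows "(\<Prod>h\<in>T. \<theta> h ^ e h) \<in> \<theta> ` carrier G"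
proof -
  have one_in: "1 \<in> \<theta> ` carrier G"
    using monoid.one_closed[OF G] one[symmetric] by (rule rev_image_eqI)
  have pow: "\<theta> h ^ n \<in> \<theta> ` carrier G" if "h \<in> carrier G" for h n
    by (induction n) (use that one_in hom_image_mult_closed[OF G hom] in auto)
  from assms(4,5) show ?thesis
    by (induction T rule: finite_induct) (auto intro: one_in pow hom_image_mult_closed[OF G hom])
qed

lemma translation_action_almost_invariant:
  fixes \<theta> :: "'g \<Rightarrow> 'a :: comm_monoid_mult"
  assumes G: "group G"
    and hom: "\<And>g h. g \<in> carrier G \<Longrightarrow> h \<in> carrier G \<Longrightarrow> \<theta> (g \<otimes>\<^bsub>G\<^esub> h) = \<theta> g * \<theta> h"
    and one: "\<theta> \<one>\<^bsub>G\<^esub> = 1"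
  shows "has_almost_invariant_vectors G (\<theta> ` carrier G) (\<lambda>g w. \<theta> g * w)"
  unfolding has_almost_invariant_vectors_def
proof (intro allI impI)
  define A where "A = \<theta> ` carrier G"
  have A_mult: "x * y \<in> A" if "x \<in> A" "y \<in> A" for x y
    using hom_image_mult_closed[OF group.is_monoid[OF G] hom] that by (simp add: A_def)
  fix F and \<epsilon> :: real
  assume "finite F \<and> F \<subseteq> carrier G \<and> \<epsilon> > 0"
  then have F: "finite F" "F \<subseteq> carrier G" and \<epsilon>: "\<epsilon> > 0" by auto
  obtain N :: nat where N: "2 / \<epsilon> < N" using reals_Archimedean2 by blast
  moreover have "0 < 2 / \<epsilon>" using \<epsilon> by simp
  ultimately have "N > 0" by linarith
  define S where "S = (\<lambda>e. \<Prod>h\<in>F. \<theta> h ^ e h) ` PiE F (\<lambda>_. {..<N})"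
  define u where "u w = sqrt (box_distribution \<theta> F N w)" for w
  have S: "finite S" "S \<subseteq> A"
    using F hom_image_prod_powers[OF group.is_monoid[OF G] hom one] by (auto simp: S_def A_def finite_PiE)
  have u_outside: "u w = 0" if "w \<notin> S" for w
    using that box_distribution_outside by (simp add: u_def S_def)
  have "((\<lambda>w. (u w)\<^sup>2) has_sum 1) A"
    using box_distribution_sum[OF F(1) \<open>N > 0\<close>, of \<theta>] u_outside box_distribution_nonneg
    by (intro has_sum_finite_neutralI[OF S]) (auto simp: u_def S_def box_distribution_nonneg)
  moreover have "(\<lambda>w. (u (\<theta> (inv\<^bsub>G\<^esub> g) * w) - u w)\<^sup>2) summable_on A \<and>
      infsum (\<lambda>w. (u (\<theta> (inv\<^bsub>G\<^esub> g) * w) - u w)\<^sup>2) A < \<epsilon>" if g: "g \<in> F" for g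
  proof -
    define c' where "c' = \<theta> (inv\<^bsub>G\<^esub> g)"
    define E where "E = (\<lambda>w. (u (c' * w) - u w)\<^sup>2)"
    define W where "W = S \<union> (\<lambda>x. \<theta> g * x) ` S"
    have inverse: "c' * \<theta> g = 1"
      using hom[of "inv\<^bsub>G\<^esub> g" g] g F G one by (auto simp: c'_def group.l_inv)
    have "\<theta> g \<in> A" using g F by (auto simp: A_def)
    then have W: "finite W" "W \<subseteq> A" using S A_mult by (auto simp: W_def)
    have "(E has_sum sum E W) A"
    proof (rule has_sum_finite_neutralI[OF W])
      fix w assume w: "w \<in> A - W"
      have "c' * w \<notin> S"
      proof
        assume "c' * w \<in> S"
        then have "\<theta> g * (c' * w) \<in> W" by (simp add: W_def)
        with w inverse show False by (simp add: mult.assoc[symmetric] mult.commute)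
      qed
      with w show "E w = 0" by (simp add: E_def W_def u_outside)
    qed simp
    then have "E summable_on A" and "infsum E A = sum E W" by (auto simp: summable_on_def infsumI)
    moreover have "sum E W \<le> (\<Sum>w\<in>W. \<bar>box_distribution \<theta> F N (c' * w) - box_distribution \<theta> F N w\<bar>)"
      unfolding E_def u_def by (intro sum_mono sqrt_diff_square_le box_distribution_nonneg)
    moreover have "\<dots> \<le> 2 / N"
      using W(1) by (intro box_distribution_shift[where c = \<theta>, OF F(1) g \<open>N > 0\<close> inverse]) (auto simp: W_def S_def)
    moreover have "2 / N < \<epsilon>" using N \<epsilon> \<open>N > 0\<close> by (simp add: field_simps)
    ultimately show ?thesis by (simp add: E_def c'_def)
  qed
  ultimately show "\<exists>u. ((\<lambda>x. (u x)\<^sup>2) has_sum 1) A \<and>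
      (\<forall>g\<in>F. (\<lambda>x. (u (\<theta> (inv\<^bsub>G\<^esub> g) * x) - u x)\<^sup>2) summable_on A \<and>
              infsum (\<lambda>x. (u (\<theta> (inv\<^bsub>G\<^esub> g) * x) - u x)\<^sup>2) A < \<epsilon>)"
    by (intro exI[of _ u]) simp
qed

lemma property_F_character_trivial:
  fixes \<theta> :: "'g \<Rightarrow> 'a :: comm_monoid_mult"
  assumes G: "group G" and countable: "countable (carrier G)" and F: "property_F G"
    and hom: "\<And>g h. g \<in> carrier G \<Longrightarrow> h \<in> carrier G \<Longrightarrow> \<theta> (g \<otimes>\<^bsub>G\<^esub> h) = \<theta> g * \<theta> h"
    and one: "\<theta> \<one>\<^bsub>G\<^esub> = 1"
    and g: "g \<in> carrier G"
  shows "\<theta> g = 1"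
proof -
  have inv_closed: "inv\<^bsub>G\<^esub> h \<in> carrier G" if "h \<in> carrier G" for h
    using G that by (rule group.inv_closed)
  have \<theta>_inv: "\<theta> h * \<theta> (inv\<^bsub>G\<^esub> h) = 1" if "h \<in> carrier G" for h
    using hom[OF that inv_closed[OF that]] G that one by (simp add: group.r_inv)
  have \<theta>_mult_inv: "\<theta> (inv\<^bsub>G\<^esub> h) * (\<theta> h * w) = w" if "h \<in> carrier G" for h w
  proof -
    have "\<theta> (inv\<^bsub>G\<^esub> h) * (\<theta> h * w) = (\<theta> h * \<theta> (inv\<^bsub>G\<^esub> h)) * w" by (simp add: ac_simps)
    then show ?thesis using \<theta>_inv[OF that] by simp
  qed
  have image_closed: "\<theta> k * \<theta> x \<in> \<theta> ` carrier G" if "k \<in> carrier G" "x \<in> carrier G" for k x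
    using that by (intro hom_image_mult_closed[OF group.is_monoid[OF G] hom]) auto
  have "\<exists>w\<in>\<theta> ` carrier G. \<forall>h\<in>carrier G. \<theta> h * w = w"
  proof (rule property_F_fixed_point[OF G F])
    show "countable (\<theta> ` carrier G)" using countable by simp
    show "bij_betw (\<lambda>w. \<theta> h * w) (\<theta> ` carrier G) (\<theta> ` carrier G)" if h: "h \<in> carrier G" for h
    proof (rule bij_betw_byWitness[where f' = "\<lambda>w. \<theta> (inv\<^bsub>G\<^esub> h) * w"])
      show "(\<lambda>w. \<theta> h * w) ` \<theta> ` carrier G \<subseteq> \<theta> ` carrier G"
        using h image_closed by auto
      show "(\<lambda>w. \<theta> (inv\<^bsub>G\<^esub> h) * w) ` \<theta> ` carrier G \<subseteq> \<theta> ` carrier G"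
        using inv_closed[OF h] image_closed by auto
    qed (use \<theta>_mult_inv \<theta>_inv h in \<open>auto simp: mult.assoc[symmetric]\<close>)
  qed (use hom G translation_action_almost_invariant[OF G hom one] in \<open>simp_all add: mult.assoc\<close>)
  then obtain h where h: "h \<in> carrier G" and fixed: "\<theta> g * \<theta> h = \<theta> h" using g by blast
  have "\<theta> g = \<theta> g * (\<theta> h * \<theta> (inv\<^bsub>G\<^esub> h))" using \<theta>_inv[OF h] by simp
  also have "\<dots> = \<theta> h * \<theta> (inv\<^bsub>G\<^esub> h)" using fixed by (simp add: mult.assoc[symmetric])
  finally show ?thesis using \<theta>_inv[OF h] by simp
qed

locale lp_representation = group G for G :: "('g, 'b) monoid_scheme" +
  fixes p :: real and \<pi> :: "'g \<Rightarrow> (nat \<Rightarrow> complex) \<Rightarrow> nat \<Rightarrow> complex"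
  assumes p_pos: "p > 0" and p_ne_2: "p \<noteq> 2" and rep: "orth_rep G p \<pi>"
begin

lemma iso: "g \<in> carrier G \<Longrightarrow> lp_iso p (\<pi> g)"
  using rep p_pos p_ne_2 by (simp add: orth_rep_def lp_iso_def)

lemma rep_mult: "g \<in> carrier G \<Longrightarrow> h \<in> carrier G \<Longrightarrow> f \<in> lp_space p \<Longrightarrow> \<pi> (g \<otimes>\<^bsub>G\<^esub> h) f = \<pi> g (\<pi> h f)"
  using rep by (simp add: orth_rep_def)

definition perm :: "'g \<Rightarrow> nat \<Rightarrow> nat" where
  "perm g = lp_iso.perm (\<pi> g)"

definition coef :: "'g \<Rightarrow> nat \<Rightarrow> complex" where
  "coef g = lp_iso.coef (\<pi> g)"

lemma image_indicator: "g \<in> carrier G \<Longrightarrow> \<pi> g (indicator {k}) = (\<lambda>n. coef g k * indicator {perm g k} n)"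
  unfolding perm_def coef_def by (rule lp_iso.image_indicator[OF iso])

lemma coef_nonzero: "g \<in> carrier G \<Longrightarrow> coef g k \<noteq> 0"
  unfolding coef_def by (rule lp_iso.coef_nonzero[OF iso])

lemma apply_perm: "g \<in> carrier G \<Longrightarrow> f \<in> lp_space p \<Longrightarrow> \<pi> g f (perm g k) = coef g k * f k"
  unfolding perm_def coef_def by (rule lp_iso.apply_perm[OF iso])

lemma bij_perm: "g \<in> carrier G \<Longrightarrow> bij (perm g)"
  unfolding perm_def by (rule lp_iso.bij_perm[OF iso])

lemma perm_mult_coef_mult:
  assumes g: "g \<in> carrier G" and h: "h \<in> carrier G"
  shows "perm (g \<otimes>\<^bsub>G\<^esub> h) k = perm g (perm h k)"
    and "coef (g \<otimes>\<^bsub>G\<^esub> h) k = coef h k * coef g (perm h k)"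
proof -
  have ind: "indicator {j} \<in> lp_space p" for j by (rule lp_space_indicator)
  have "(\<lambda>n. coef (g \<otimes>\<^bsub>G\<^esub> h) k * indicator {perm (g \<otimes>\<^bsub>G\<^esub> h) k} n)
      = \<pi> g (\<pi> h (indicator {k}))"
    using image_indicator[OF m_closed[OF g h]] rep_mult[OF g h ind] by simp
  also have "\<dots> = (\<lambda>n. coef h k * (coef g (perm h k) * indicator {perm g (perm h k)} n))"
    using image_indicator[OF h] image_indicator[OF g] lp_iso.scale[OF iso[OF g] ind] by simp
  finally have eq: "coef (g \<otimes>\<^bsub>G\<^esub> h) k * indicator {perm (g \<otimes>\<^bsub>G\<^esub> h) k} n
      = coef h k * (coef g (perm h k) * indicator {perm g (perm h k)} n)" for n
    by (rule fun_cong)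
  show perm_eq: "perm (g \<otimes>\<^bsub>G\<^esub> h) k = perm g (perm h k)"
  proof (rule ccontr)
    assume "perm (g \<otimes>\<^bsub>G\<^esub> h) k \<noteq> perm g (perm h k)"
    with eq[of "perm (g \<otimes>\<^bsub>G\<^esub> h) k"] coef_nonzero[OF m_closed[OF g h]] show False
      by (simp add: indicator_def)
  qed
  show "coef (g \<otimes>\<^bsub>G\<^esub> h) k = coef h k * coef g (perm h k)"
    using eq[of "perm (g \<otimes>\<^bsub>G\<^esub> h) k"] perm_eq by simp
qed

definition fixed_coords :: "nat set" where
  "fixed_coords = {k. \<forall>g\<in>carrier G. perm g k = k}"

lemma fixed_coord_invariant:
  assumes countable: "countable (carrier G)" and F: "property_F G"
    and k: "k \<in> fixed_coords" and g: "g \<in> carrier G" and f: "f \<in> lp_space p"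
  shows "\<pi> g f k = f k"
proof -
  have hom: "coef (g \<otimes>\<^bsub>G\<^esub> h) k = coef g k * coef h k" if "g \<in> carrier G" "h \<in> carrier G" for g h
    using perm_mult_coef_mult(2)[OF that] k that(2) by (simp add: fixed_coords_def mult.commute)
  have "coef \<one>\<^bsub>G\<^esub> k = coef \<one>\<^bsub>G\<^esub> k * coef \<one>\<^bsub>G\<^esub> k"
    using hom[OF one_closed one_closed] by simp
  then have "coef \<one>\<^bsub>G\<^esub> k = 1" using coef_nonzero[OF one_closed] by simp
  then have "coef g k = 1"
    by (intro property_F_character_trivial[OF is_group countable F _ _ g, of "\<lambda>g. coef g k"] hom)
  then show ?thesis using apply_perm[OF g f, of k] k g by (simp add: fixed_coords_def)
qed

lemma lp_prime_vanishes_on_fixed_coords: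
  assumes countable: "countable (carrier G)" and F: "property_F G"
    and f: "f \<in> lp_prime G p \<pi>" and k: "k \<in> fixed_coords"
  shows "f k = 0"
proof -
  have "indicator {k} \<in> dual_invariant G p \<pi>"
    using fixed_coord_invariant[OF countable F k inv_closed] lp_space_indicator
    by (simp add: dual_invariant_def pairing_indicator)
  then have "pairing f (indicator {k}) = 0" using f unfolding lp_prime_def by blast
  then show ?thesis by (simp add: pairing_indicator)
qed

lemma bij_betw_perm_moved:
  assumes g: "g \<in> carrier G"
  shows "bij_betw (perm g) (- fixed_coords) (- fixed_coords)"
proof -
  have inj: "inj (perm g)" and surj: "surj (perm g)" using bij_perm[OF g] by (simp_all add: bij_def)
  have perm_fixed: "perm g k = k" if "k \<in> fixed_coords" for k using that g by (simp add: fixed_coords_def)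
  have "perm g ` (- fixed_coords) = - fixed_coords"
  proof
    show "perm g ` (- fixed_coords) \<subseteq> - fixed_coords"
    proof (intro image_subsetI ComplI)
      fix k assume k: "k \<in> - fixed_coords" and moved: "perm g k \<in> fixed_coords"
      then have "perm g (perm g k) = perm g k" using perm_fixed by blast
      with inj have "perm g k = k" by (rule injD)
      with k moved show False by simp
    qed
    show "- fixed_coords \<subseteq> perm g ` (- fixed_coords)"
    proof
      fix j assume j: "j \<in> - fixed_coords"
      obtain k where "j = perm g k" using surj by (metis surjD)
      with j perm_fixed show "j \<in> perm g ` (- fixed_coords)" by auto
    qed
  qed
  then show ?thesis using inj_on_subset[OF inj subset_UNIV] by (simp add: bij_betw_def)
qed

lemma almost_invariant_vectors_on_moved:
  assumes f_lp: "\<And>n. f n \<in> lp_space p" and f_unit: "\<And>n. lp_norm p (f n) = 1"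
    and f_fixed: "\<And>n k. k \<in> fixed_coords \<Longrightarrow> f n k = 0"
    and conv: "\<And>g. g \<in> carrier G \<Longrightarrow> (\<lambda>n. lp_norm p (\<lambda>k. \<pi> g (f n) k - f n k)) \<longlonglongrightarrow> 0"
  shows "has_almost_invariant_vectors G (- fixed_coords) perm"
  unfolding has_almost_invariant_vectors_def
proof (intro allI impI)
  fix F and \<epsilon> :: real
  assume "finite F \<and> F \<subseteq> carrier G \<and> \<epsilon> > 0"
  then have F: "finite F" "F \<subseteq> carrier G" and \<epsilon>: "\<epsilon> > 0" by auto
  define D where "D = (\<lambda>g n. lp_sum p (\<lambda>k. \<pi> (inv\<^bsub>G\<^esub> g) (f n) k - f n k))"
  have "\<forall>\<^sub>F n in sequentially. mazur_modulus p (D g n) < \<epsilon>" if g: "g \<in> F" for g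
    using mazur_modulus_lp_sum_tendsto_0[OF p_pos conv[OF inv_closed]] g F \<epsilon>
    unfolding D_def by (intro order_tendstoD) auto
  then have "\<forall>\<^sub>F n in sequentially. \<forall>g\<in>F. mazur_modulus p (D g n) < \<epsilon>"
    using F(1) by (intro eventually_ball_finite) auto
  then obtain n where n: "\<And>g. g \<in> F \<Longrightarrow> mazur_modulus p (D g n) < \<epsilon>"
    unfolding eventually_sequentially by blast
  define u where "u x = cmod (f n x) powr (p / 2)" for x
  have "((\<lambda>x. cmod (f n x) powr p) has_sum 1) UNIV"
    using lp_sum_has_sum[OF f_lp] f_unit lp_norm_eq_1_iff[OF p_pos] by simp
  then have "((\<lambda>x. (u x)\<^sup>2) has_sum 1) (- fixed_coords)"
    by (subst has_sum_cong_neutral[where T = UNIV]) (auto simp: u_def powr_half_square f_fixed)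
  moreover have "(\<lambda>x. (u (perm (inv\<^bsub>G\<^esub> g) x) - u x)\<^sup>2) summable_on - fixed_coords \<and>
      infsum (\<lambda>x. (u (perm (inv\<^bsub>G\<^esub> g) x) - u x)\<^sup>2) (- fixed_coords) < \<epsilon>" if g: "g \<in> F" for g
  proof -
    have iso_g: "lp_iso p (\<pi> (inv\<^bsub>G\<^esub> g))" using g F by (intro iso inv_closed) auto
    have unit: "lp_sum p (f n) = 1" using f_unit lp_norm_eq_1_iff[OF p_pos] by simp
    define E where "E = (\<lambda>x. (u (perm (inv\<^bsub>G\<^esub> g) x) - u x)\<^sup>2)"
    have E: "E summable_on UNIV" "infsum E UNIV \<le> mazur_modulus p (D g n)"
      using lp_iso.mazur_displacement[OF iso_g f_lp unit] by (simp_all add: E_def u_def D_def perm_def)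
    have "infsum E (- fixed_coords) \<le> infsum E UNIV"
      using E(1) by (intro infsum_mono_neutral summable_on_subset[OF E(1)]) (auto simp: E_def)
    then show ?thesis using E summable_on_subset[OF E(1)] n[OF g] by (simp add: E_def)
  qed
  ultimately show "\<exists>u. ((\<lambda>x. (u x)\<^sup>2) has_sum 1) (- fixed_coords) \<and>
      (\<forall>g\<in>F. (\<lambda>x. (u (perm (inv\<^bsub>G\<^esub> g) x) - u x)\<^sup>2) summable_on - fixed_coords \<and>
              infsum (\<lambda>x. (u (perm (inv\<^bsub>G\<^esub> g) x) - u x)\<^sup>2) (- fixed_coords) < \<epsilon>)"
    by (intro exI[of _ u]) simp
qed

end

theorem proposition1p15:
  fixes G :: "('g, 'b) monoid_scheme" and p :: real
  assumes "group G" and "countable (carrier G)" and "property_F G"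
    and "1 < p" and "p \<noteq> 2"
  shows "property_T_lp G p"
  unfolding property_T_lp_def
proof (intro allI impI notI)
  fix \<pi> assume "orth_rep G p \<pi>"
  then interpret lp_representation G p \<pi>
    using assms by (simp add: lp_representation_def lp_representation_axioms_def)
  assume "\<exists>f :: nat \<Rightarrow> nat \<Rightarrow> complex.
      (\<forall>n. f n \<in> lp_prime G p \<pi> \<and> lp_norm p (f n) = 1) \<and>
      (\<forall>g\<in>carrier G. (\<lambda>n. lp_norm p (\<lambda>k. \<pi> g (f n) k - f n k)) \<longlonglongrightarrow> 0)"
  then obtain f where f: "\<And>n. f n \<in> lp_prime G p \<pi>" "\<And>n. lp_norm p (f n) = 1"
    and conv: "\<And>g. g \<in> carrier G \<Longrightarrow> (\<lambda>n. lp_norm p (\<lambda>k. \<pi> g (f n) k - f n k)) \<longlonglongrightarrow> 0"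
    by blast
  have "has_almost_invariant_vectors G (- fixed_coords) perm"
    using f conv lp_prime_vanishes_on_fixed_coords[OF assms(2,3) f(1)]
    by (intro almost_invariant_vectors_on_moved[of f]) (auto simp: lp_prime_def)
  then obtain k where "k \<in> - fixed_coords" "\<forall>g\<in>carrier G. perm g k = k"
    using property_F_fixed_point[OF is_group assms(3) _ bij_betw_perm_moved perm_mult_coef_mult(1)]
    by auto
  then show False by (simp add: fixed_coords_def)
qed

end
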